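(* Let $X_1,X_2,\ldots$ be i.i.d. with mean $0$ and variance $1$, $Z_1,Z_2,\ldots$ i.i.d. $N(0,1)$ independent of the $X$'s, and let $G_n\in\mathscr G_n$ with $|E(G_n)|\to\infty$ satisfy the $\Sigma$-co-degree condition for an infinite matrix $\Sigma=((\sigma_{st}))_{s,t\ge1}$. Fix $M$ large enough that $b_M>0$ and let $\bm X_{\infty,M}=(X_{1,M},X_{2,M},\ldots)^\top$. Then, as $n\to\infty$ followed by $K_1,K_2\to\infty$, $U_{13,n,M}\to Q_{1,M}$ in distribution and in all moments, where $Q_{1,M}\sim N(0,\bm X_{\infty,M}^\top\Sigma\bm X_{\infty,M})$. Furthermore, the moment generating function of $Q_{1,M}$ is finite in an open interval containing $0$.
   Context: $\mathscr G_n$: simple undirected graphs on $\{1,\ldots,n\}$ labeled so that degrees satisfy $d_1\ge\cdots\ge d_n$; $A(G_n)=((a_{u,v}))$ adjacency matrix, $E(G_n)$ edge set. $\Sigma$-co-degree condition: for each fixed $s,t\ge1$, $\lim_{n\to\infty}\frac{1}{|E(G_n)|}\sum_{v=1}^na_{s,v}a_{v,t}=\sigma_{st}$. Truncation: $a_M=\mathbb E[X_1\mathbf 1\{|X_1|\le M\}]$, $b_M=\operatorname{Var}[X_1\mathbf 1\{|X_1|\le M\}]$, $X_{u,M}:=b_M^{-1/2}(X_u\mathbf 1\{|X_u|\le M\}-a_M)$. $\bm X_{\infty,M}^\top\Sigma\bm X_{\infty,M}$ denotes the $L^1$-limit as $K\to\infty$ of $\sum_{1\le s,t\le K}\sigma_{st}X_{s,M}X_{t,M}$.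 For a nonnegative random variable $A$, $N(0,A)$ is the law of $\sqrt A\,W$ with $W\sim N(0,1)$ independent of $A$. For $K_1,K_2\ge1$: $V_1=\{1,\ldots,\lfloor K_1\rfloor\}$, $V_3=\{\lfloor K_2\sqrt{|E(G_n)|}\rfloor+1,\ldots,n\}$, $A_{13}$ is the submatrix of $A(G_n)$ with rows in $V_1$, columns in $V_3$, $\bm X^{(1)}_{n,M}=(X_{u,M})_{u\in V_1}$, $\bm Z^{(3)}_n=(Z_u)_{u\in V_3}$, and $U_{13,n,M}:=\frac{(\bm X^{(1)}_{n,M})^\top A_{13}\bm Z^{(3)}_n}{\sqrt{|E(G_n)|}}$. *)

theory Defs
  imports "HOL-Probability.Probability"
begin

text \<open>Vertices are 1,...,n. adj n u v means that u and v are adjacent in G_n.\<close>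

definition simple_graph_on :: "nat \<Rightarrow> (nat \<Rightarrow> nat \<Rightarrow> bool) \<Rightarrow> bool" where
  "simple_graph_on n E \<longleftrightarrow>
     (\<forall>u v. E u v \<longrightarrow> u \<in> {1..n} \<and> v \<in> {1..n}) \<and>
     (\<forall>u v. E u v \<longrightarrow> E v u) \<and> (\<forall>u. \<not> E u u)"

definition degree :: "nat \<Rightarrow> (nat \<Rightarrow> nat \<Rightarrow> bool) \<Rightarrow> nat \<Rightarrow> nat" where
  "degree n E u = card {v \<in> {1..n}. E u v}"

definition in_graph_class :: "nat \<Rightarrow> (nat \<Rightarrow> nat \<Rightarrow> bool) \<Rightarrow> bool" where
  "in_graph_class n E \<longleftrightarrow> simple_graph_on n E \<and>
     (\<forall>u v. 1 \<le> u \<longrightarrow> u \<le> v \<longrightarrow> v \<le> n \<longrightarrow> degree n E v \<le> degree n E u)"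

definition num_edges :: "nat \<Rightarrow> (nat \<Rightarrow> nat \<Rightarrow> bool) \<Rightarrow> nat" where
  "num_edges n E = card {(u, v). u \<in> {1..n} \<and> v \<in> {1..n} \<and> u < v \<and> E u v}"

text \<open>Adjacency matrix entry a_{u,v} (0 outside the vertex set).\<close>
definition adj_entry :: "(nat \<Rightarrow> nat \<Rightarrow> bool) \<Rightarrow> nat \<Rightarrow> nat \<Rightarrow> real" where
  "adj_entry E u v = (if E u v then 1 else 0)"

definition codegree_condition :: "(nat \<Rightarrow> nat \<Rightarrow> nat \<Rightarrow> bool) \<Rightarrow> (nat \<Rightarrow> nat \<Rightarrow> real) \<Rightarrow> bool" where
  "codegree_condition G \<sigma> \<longleftrightarrow>
     (\<forall>s t. 1 \<le> s \<longrightarrow> 1 \<le> t \<longrightarrow>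
        (\<lambda>n. (\<Sum>v\<in>{1..n}. adj_entry (G n) s v * adj_entry (G n) v t) / real (num_edges n (G n)))
          \<longlonglongrightarrow> \<sigma> s t)"

text \<open>Truncation constants a_M, b_M and the truncated standardized variables X_{u,M}.\<close>
definition trunc_mean :: "'a measure \<Rightarrow> ('a \<Rightarrow> real) \<Rightarrow> real \<Rightarrow> real" where
  "trunc_mean P Y M = prob_space.expectation P (\<lambda>\<omega>. Y \<omega> * indicator {x. \<bar>x\<bar> \<le> M} (Y \<omega>))"

definition trunc_var :: "'a measure \<Rightarrow> ('a \<Rightarrow> real) \<Rightarrow> real \<Rightarrow> real" where
  "trunc_var P Y M = prob_space.variance P (\<lambda>\<omega>. Y \<omega> * indicator {x. \<bar>x\<bar> \<le> M} (Y \<omega>))"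

definition XM :: "'a measure \<Rightarrow> (nat \<Rightarrow> 'a \<Rightarrow> real) \<Rightarrow> real \<Rightarrow> nat \<Rightarrow> 'a \<Rightarrow> real" where
  "XM P X M u \<omega> = (X u \<omega> * indicator {x. \<bar>x\<bar> \<le> M} (X u \<omega>) - trunc_mean P (X 1) M)
                     / sqrt (trunc_var P (X 1) M)"

definition U13 :: "'a measure \<Rightarrow> (nat \<Rightarrow> 'a \<Rightarrow> real) \<Rightarrow> (nat \<Rightarrow> 'a \<Rightarrow> real) \<Rightarrow>
    (nat \<Rightarrow> nat \<Rightarrow> nat \<Rightarrow> bool) \<Rightarrow> real \<Rightarrow> nat \<Rightarrow> real \<Rightarrow> real \<Rightarrow> 'a \<Rightarrow> real" where
  "U13 P X Z G M n K1 K2 \<omega> =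
     (\<Sum>u\<in>{1..nat \<lfloor>K1\<rfloor>}. \<Sum>v\<in>{nat \<lfloor>K2 * sqrt (real (num_edges n (G n)))\<rfloor> + 1..n}.
        XM P X M u \<omega> * adj_entry (G n) u v * Z v \<omega>) / sqrt (real (num_edges n (G n)))"

definition L1_quad_limit :: "'a measure \<Rightarrow> (nat \<Rightarrow> 'a \<Rightarrow> real) \<Rightarrow> (nat \<Rightarrow> nat \<Rightarrow> real) \<Rightarrow> real \<Rightarrow> ('a \<Rightarrow> real) \<Rightarrow> bool" where
  "L1_quad_limit P X \<sigma> M T \<longleftrightarrow> integrable P T \<and>
     (\<lambda>K. \<integral>\<omega>. \<bar>(\<Sum>s\<in>{1..K}. \<Sum>t\<in>{1..K}. \<sigma> s t * XM P X M s \<omega> * XM P X M t \<omega>) - T \<omega>\<bar> \<partial>P)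
       \<longlonglongrightarrow> 0"

text \<open>Standard normal law and the mixture N(0,A): the law of sqrt(A) W, W ~ N(0,1) independent of A.\<close>
definition std_normal_measure :: "real measure" where
  "std_normal_measure = density lborel std_normal_density"

definition normal_mixture :: "'a measure \<Rightarrow> ('a \<Rightarrow> real) \<Rightarrow> real measure" where
  "normal_mixture P A = distr (P \<Otimes>\<^sub>M std_normal_measure) borel (\<lambda>(\<omega>, w). sqrt (A \<omega>) * w)"

end

(*
  Conditionally on the X's, U_{13,n,M} = sum_{v in V_3} c_v Z_v is a centred Gaussian with variance
  V_n = |E|^{-1} sum_{v in V_3} (sum_{u <= K} X_{u,M} a_{uv})^2, so E f(U_{13,n,M}) = E H_f(V_n)
  with H_f(s) = E f(sqrt s W).  Expanding the square, V_n is a quadratic form in X_{1,M},...,X_{K,M}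
  whose coefficients are co-degrees restricted to V_3; as only O(sqrt |E|) vertices are missing
  from V_3, the co-degree condition gives V_n -> S_K = sum_{s,t <= K} sigma_st X_{s,M} X_{t,M}
  pointwise as n -> infinity, where K = floor K_1 and K_2 drops out.  The X_{u,M} are orthonormal
  and sum_s sigma_ss <= 2 by the handshake lemma, so (S_K) is Cauchy in L^1, with a limit T >= 0.
  Hoeffding's lemma for the bounded centred X_{u,M}, linearised by a Gaussian integral and averaged
  by Jensen over the neighbourhoods, gives E exp(c V_n) <= sqrt 2 uniformly; by Fatou the same
  holds for S_K and T.  This exponential moment gives the moments and the moment generating
  function of N(0,T) near 0, and, after clipping, lets E H_f(S_K) converge to E H_f(T) for f
  bounded continuous or a power.
*)

theory Submission
  imports Defs
begin

lemma abs_power2_add_diff_le: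
  fixes x y e :: real
  assumes "e > 0"
  shows "\<bar>(x + y)\<^sup>2 - x\<^sup>2\<bar> \<le> e * x\<^sup>2 + (1 + 1 / e) * y\<^sup>2"
proof -
  have "0 \<le> (e * \<bar>x\<bar> - \<bar>y\<bar>)\<^sup>2" by simp
  then have "2 * \<bar>x\<bar> * \<bar>y\<bar> \<le> e * x\<^sup>2 + y\<^sup>2 / e"
    using assms by (simp add: field_simps power2_eq_square)
  moreover have "\<bar>(x + y)\<^sup>2 - x\<^sup>2\<bar> \<le> 2 * \<bar>x\<bar> * \<bar>y\<bar> + y\<^sup>2"
  proof -
    have "(x + y)\<^sup>2 - x\<^sup>2 = 2 * x * y + y\<^sup>2" by (simp add: power2_eq_square algebra_simps)
    then show ?thesis by (simp add: abs_mult abs_triangle_ineq[THEN order_trans])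
  qed
  ultimately show ?thesis by (simp add: algebra_simps)
qed

lemma power_le_fact_mult_exp:
  fixes y :: real
  assumes "0 \<le> y"
  shows "y ^ k \<le> fact k * exp y"
proof -
  have s: "(\<lambda>n. y ^ n / fact n) sums exp y"
    using exp_converges[of y] by (simp add: divide_inverse scaleR_conv_of_real mult.commute)
  have "sum (\<lambda>n. y ^ n / fact n) {k} \<le> (\<Sum>n. y ^ n / fact n)"
    by (rule sum_le_suminf) (use s assms in \<open>auto simp: sums_iff\<close>)
  then have "y ^ k / fact k \<le> exp y" using s by (simp add: sums_iff)
  then show ?thesis by (simp add: divide_le_eq mult.commute)
qed

lemma abs_sqrt_power_le_exp:
  assumes "c > 0"
  shows "\<bar>sqrt s ^ k\<bar> \<le> (2 / c) ^ k * fact k * exp (c / 2) * exp (c * \<bar>s\<bar> / 2)"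
proof -
  define t where "t = sqrt \<bar>s\<bar>"
  have t0: "t \<ge> 0" and t2: "t\<^sup>2 = \<bar>s\<bar>" by (auto simp: t_def)
  have "\<bar>sqrt s ^ k\<bar> = t ^ k"
    by (cases "s \<ge> 0") (auto simp: t_def power_abs real_sqrt_minus)
  also have "\<dots> \<le> (1 + t\<^sup>2) ^ k"
  proof (rule power_mono[OF _ t0])
    have "0 \<le> (t - 1/2)\<^sup>2" by simp
    then show "t \<le> 1 + t\<^sup>2" by (simp add: power2_eq_square algebra_simps)
  qed
  also have "\<dots> = (2 / c) ^ k * (c * (1 + t\<^sup>2) / 2) ^ k"
  proof -
    have "(2 / c) * (c * (1 + t\<^sup>2) / 2) = 1 + t\<^sup>2" using assms by simp
    then show ?thesis by (metis power_mult_distrib)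
  qed
  also have "\<dots> \<le> (2 / c) ^ k * (fact k * exp (c * (1 + t\<^sup>2) / 2))"
    using assms t0 by (intro mult_left_mono power_le_fact_mult_exp) auto
  also have "exp (c * (1 + t\<^sup>2) / 2) = exp (c / 2) * exp (c * \<bar>s\<bar> / 2)"
    by (simp add: t2 distrib_left add_divide_distrib exp_add)
  finally show ?thesis by (simp add: mult_ac)
qed

lemma exp_growth_const_nonneg:
  fixes H g :: "real \<Rightarrow> real"
  assumes "\<And>x. \<bar>H x\<bar> \<le> A * exp (g x)"
  shows "0 \<le> A"
proof -
  have "0 \<le> A * exp (g 0)" using assms[of 0] abs_ge_zero order_trans by blast
  then show ?thesis by (simp add: zero_le_mult_iff)
qed

lemma exp_sum_le_subconvex:
  fixes p y :: "'i \<Rightarrow> real"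
  assumes "finite V" "\<And>v. v \<in> V \<Longrightarrow> 0 \<le> p v" "sum p V \<le> 1"
  shows "exp (\<Sum>v\<in>V. p v * y v) \<le> (1 - sum p V) + (\<Sum>v\<in>V. p v * exp (y v))"
proof -
  \<comment> \<open>Jensen for the convex combination that puts the missing weight on the point 0.\<close>
  define q where "q = case_option (1 - sum p V) p"
  define z where "z = case_option 0 y"
  have fin: "finite (insert None (Some ` V))" using assms(1) by simp
  have split: "(\<Sum>i\<in>insert None (Some ` V). f i) = f None + (\<Sum>v\<in>V. f (Some v))" for f :: "_ \<Rightarrow> real"
    using assms(1) by (simp add: sum.reindex)
  have "exp (\<Sum>i\<in>insert None (Some ` V). q i * z i) \<le> (\<Sum>i\<in>insert None (Some ` V). q i * exp (z i))"
  proof (rule convex_on_sum[OF fin _ exp_convex, of q z, unfolded real_scaleR_def])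
    show "sum q (insert None (Some ` V)) = 1" by (simp add: split q_def)
    show "\<And>i. i \<in> insert None (Some ` V) \<Longrightarrow> 0 \<le> q i"
      using assms by (auto simp: q_def)
  qed simp_all
  then show ?thesis by (simp add: split q_def z_def)
qed

lemma LIMSEQ_subseq_subseqI:
  fixes X :: "nat \<Rightarrow> real"
  assumes "\<And>r :: nat \<Rightarrow> nat. strict_mono r \<Longrightarrow> \<exists>r' :: nat \<Rightarrow> nat. strict_mono r' \<and> (\<lambda>n. X (r (r' n))) \<longlonglongrightarrow> L"
  shows "X \<longlonglongrightarrow> L"
proof (rule ccontr)
  assume "\<not> X \<longlonglongrightarrow> L"
  then obtain e where e: "e > 0" and fr: "\<forall>N. \<exists>n\<ge>N. \<not> dist (X n) L < e"
    unfolding lim_sequentially by blast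
  define A where "A = {n. dist (X n) L \<ge> e}"
  have A: "infinite A"
    unfolding infinite_nat_iff_unbounded_le A_def using fr by (auto simp: not_less)
  define r where "r = enumerate A"
  have r: "strict_mono r" unfolding r_def by (rule strict_mono_enumerate[OF A])
  have far: "dist (X (r n)) L \<ge> e" for n
    using enumerate_in_set[OF A, of n] by (simp add: r_def A_def)
  obtain r' where "(\<lambda>n. X (r (r' n))) \<longlonglongrightarrow> L" using assms[OF r] by blast
  then obtain N where "\<forall>n\<ge>N. dist (X (r (r' n))) L < e" using e unfolding lim_sequentially by blast
  then show False using far[of "r' N"] by auto
qed

lemma limsup_abs_diff_tendsto_iterated:
  fixes F :: "nat \<Rightarrow> real \<Rightarrow> real \<Rightarrow> real" and g :: "nat \<Rightarrow> real"
  assumes lim: "\<And>K1 K2. (\<lambda>n. F n K1 K2) \<longlonglongrightarrow> g (nat \<lfloor>K1\<rfloor>)" and g: "g \<longlonglongrightarrow> L"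
  shows "((\<lambda>(K1, K2). limsup (\<lambda>n. ereal \<bar>F n K1 K2 - L\<bar>)) \<longlongrightarrow> 0) (at_top \<times>\<^sub>F at_top)"
proof -
  have eq: "(\<lambda>(K1, K2). limsup (\<lambda>n. ereal \<bar>F n K1 K2 - L\<bar>)) = (\<lambda>p. ereal \<bar>g (nat \<lfloor>fst p\<rfloor>) - L\<bar>)"
  proof (intro ext, clarsimp)
    fix K1 K2
    have "(\<lambda>n. ereal \<bar>F n K1 K2 - L\<bar>) \<longlonglongrightarrow> ereal \<bar>g (nat \<lfloor>K1\<rfloor>) - L\<bar>"
      by (intro tendsto_ereal tendsto_rabs tendsto_diff lim tendsto_const)
    then show "limsup (\<lambda>n. ereal \<bar>F n K1 K2 - L\<bar>) = ereal \<bar>g (nat \<lfloor>K1\<rfloor>) - L\<bar>"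
      by (rule lim_imp_Limsup[OF trivial_limit_sequentially])
  qed
  have "filterlim (\<lambda>x::real. nat \<lfloor>x\<rfloor>) sequentially at_top"
    unfolding filterlim_at_top
  proof
    fix Z :: nat
    show "\<forall>\<^sub>F x in at_top. Z \<le> nat \<lfloor>x::real\<rfloor>"
      using eventually_ge_at_top[of "real Z"] by eventually_elim (simp add: le_nat_floor)
  qed
  then have floor_fst: "filterlim (\<lambda>p::real \<times> real. nat \<lfloor>fst p\<rfloor>) sequentially (at_top \<times>\<^sub>F at_top)"
    by (rule filterlim_compose[OF _ filterlim_fst])
  have "((\<lambda>K. ereal \<bar>g K - L\<bar>) \<longlongrightarrow> ereal \<bar>L - L\<bar>) sequentially"
    by (intro tendsto_ereal tendsto_rabs tendsto_diff g tendsto_const)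
  then show ?thesis
    unfolding eq using filterlim_compose[OF _ floor_fst] by (simp add: comp_def zero_ereal_def)
qed

definition clip :: "real \<Rightarrow> real \<Rightarrow> real" where
  "clip R x = max (- R) (min x R)"

lemma continuous_on_clip: "continuous_on UNIV (clip R)"
  unfolding clip_def by (intro continuous_intros)

lemma abs_clip_le: "0 \<le> R \<Longrightarrow> \<bar>clip R x\<bar> \<le> R"
  by (auto simp: clip_def)

lemma clip_eq_self: "\<bar>x\<bar> \<le> R \<Longrightarrow> clip R x = x"
  by (auto simp: clip_def)

lemma abs_diff_clip_le:
  fixes H :: "real \<Rightarrow> real"
  assumes growth: "\<And>x. \<bar>H x\<bar> \<le> A * exp (c * \<bar>x\<bar> / 2)" and "0 < c" "0 \<le> R"
  shows "\<bar>H x - H (clip R x)\<bar> \<le> 2 * A * exp (- c * R / 2) * exp (c * \<bar>x\<bar>)"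
proof (cases "\<bar>x\<bar> \<le> R")
  case True
  then show ?thesis using exp_growth_const_nonneg[OF growth] by (simp add: clip_eq_self)
next
  case False
  have A: "0 \<le> A" by (rule exp_growth_const_nonneg[OF growth])
  have "\<bar>H x - H (clip R x)\<bar> \<le> A * exp (c * \<bar>x\<bar> / 2) + A * exp (c * \<bar>clip R x\<bar> / 2)"
    using growth[of x] growth[of "clip R x"] by linarith
  also have "\<dots> \<le> 2 * A * exp (c * \<bar>x\<bar> / 2)"
    using abs_clip_le[OF assms(3), of x] False assms(2) A by (simp add: mult_left_mono)
  also have "exp (c * \<bar>x\<bar> / 2) = exp (- c * \<bar>x\<bar> / 2) * exp (c * \<bar>x\<bar>)"
    by (simp add: exp_add[symmetric])
  also have "exp (- c * \<bar>x\<bar> / 2) \<le> exp (- c * R / 2)" using False assms(2) by simp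
  finally show ?thesis using A by (simp add: mult_ac mult_right_mono)
qed

lemma nn_integral_le_of_AE_tendsto:
  fixes f :: "nat \<Rightarrow> 'a \<Rightarrow> real"
  assumes [measurable]: "\<And>i. f i \<in> borel_measurable M"
    and lim: "AE x in M. (\<lambda>i. f i x) \<longlonglongrightarrow> g x"
    and bound: "\<forall>\<^sub>F i in sequentially. (\<integral>\<^sup>+x. ennreal (f i x) \<partial>M) \<le> D"
  shows "(\<integral>\<^sup>+x. ennreal (g x) \<partial>M) \<le> D"
proof -
  have "(\<integral>\<^sup>+x. ennreal (g x) \<partial>M) = (\<integral>\<^sup>+x. liminf (\<lambda>i. ennreal (f i x)) \<partial>M)"
  proof (rule nn_integral_cong_AE)
    show "AE x in M. ennreal (g x) = liminf (\<lambda>i. ennreal (f i x))"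
      using lim
    proof eventually_elim
      case (elim x)
      then have "(\<lambda>i. ennreal (f i x)) \<longlonglongrightarrow> ennreal (g x)" by (rule tendsto_ennrealI)
      then show ?case by (simp add: lim_imp_Liminf)
    qed
  qed
  also have "\<dots> \<le> liminf (\<lambda>i. \<integral>\<^sup>+x. ennreal (f i x) \<partial>M)"
    by (rule nn_integral_liminf) simp
  also have "\<dots> \<le> liminf (\<lambda>i. D)" by (rule Liminf_mono[OF bound])
  finally show ?thesis by (simp add: Liminf_const)
qed

lemma integrable_of_nn_integral_abs_le:
  fixes g :: "'a \<Rightarrow> real"
  assumes [measurable]: "g \<in> borel_measurable M"
    and bound: "(\<integral>\<^sup>+x. ennreal \<bar>g x\<bar> \<partial>M) \<le> ennreal D" and "0 \<le> D"
  shows "integrable M g" "(\<integral>x. \<bar>g x\<bar> \<partial>M) \<le> D"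
proof -
  show int: "integrable M g"
    using bound by (intro integrableI_bounded) (auto simp: order_le_less_trans)
  have "ennreal (\<integral>x. \<bar>g x\<bar> \<partial>M) \<le> ennreal D"
    using bound int by (subst nn_integral_eq_integral[symmetric]) auto
  then show "(\<integral>x. \<bar>g x\<bar> \<partial>M) \<le> D" using \<open>0 \<le> D\<close> by (simp add: ennreal_le_iff)
qed

lemma integrable_exp_abs_of_nn_integral_le:
  assumes [measurable]: "f \<in> borel_measurable M" and "AE x in M. 0 \<le> f x"
    and bound: "(\<integral>\<^sup>+x. ennreal (exp (c * f x)) \<partial>M) \<le> ennreal D" and "0 \<le> D"
  shows "integrable M (\<lambda>x. exp (c * \<bar>f x\<bar>))" "(\<integral>x. exp (c * \<bar>f x\<bar>) \<partial>M) \<le> D"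
proof -
  have "(\<integral>\<^sup>+x. ennreal \<bar>exp (c * \<bar>f x\<bar>)\<bar> \<partial>M) = (\<integral>\<^sup>+x. ennreal (exp (c * f x)) \<partial>M)"
  proof (rule nn_integral_cong_AE)
    show "AE x in M. ennreal \<bar>exp (c * \<bar>f x\<bar>)\<bar> = ennreal (exp (c * f x))"
      using assms(2) by eventually_elim simp
  qed
  with bound integrable_of_nn_integral_abs_le[of "\<lambda>x. exp (c * \<bar>f x\<bar>)" M D] \<open>0 \<le> D\<close>
  show "integrable M (\<lambda>x. exp (c * \<bar>f x\<bar>))" "(\<integral>x. exp (c * \<bar>f x\<bar>) \<partial>M) \<le> D"
    by simp_all
qed

lemma L1_dist_le_of_AE_subseq_tendsto:
  fixes S :: "nat \<Rightarrow> 'a \<Rightarrow> real"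
  assumes int: "\<And>K. integrable M (S K)" and [measurable]: "T \<in> borel_measurable M"
    and "strict_mono r" and lim: "AE x in M. (\<lambda>i. S (r i) x) \<longlonglongrightarrow> T x"
    and close: "\<And>i j. N \<le> i \<Longrightarrow> N \<le> j \<Longrightarrow> (\<integral>x. \<bar>S i x - S j x\<bar> \<partial>M) \<le> e"
    and "N \<le> K" "0 \<le> e"
  shows "integrable M (\<lambda>x. S K x - T x)" "(\<integral>x. \<bar>S K x - T x\<bar> \<partial>M) \<le> e"
proof -
  have [measurable]: "S i \<in> borel_measurable M" for i using int by blast
  have "(\<integral>\<^sup>+x. ennreal \<bar>S K x - T x\<bar> \<partial>M) \<le> ennreal e"
  proof (rule nn_integral_le_of_AE_tendsto[where f="\<lambda>i x. \<bar>S K x - S (r i) x\<bar>"])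
    show "AE x in M. (\<lambda>i. \<bar>S K x - S (r i) x\<bar>) \<longlonglongrightarrow> \<bar>S K x - T x\<bar>"
      using lim by eventually_elim (intro tendsto_intros)
    have "\<forall>\<^sub>F i in sequentially. N \<le> r i"
      using eventually_ge_at_top[of N] by eventually_elim (meson order_trans \<open>strict_mono r\<close> seq_suble)
    then show "\<forall>\<^sub>F i in sequentially. (\<integral>\<^sup>+x. ennreal \<bar>S K x - S (r i) x\<bar> \<partial>M) \<le> ennreal e"
    proof eventually_elim
      case (elim i)
      then show ?case using close[OF \<open>N \<le> K\<close> elim] int
        by (subst nn_integral_eq_integral) (auto intro!: ennreal_leI)
    qed
  qed simp
  from integrable_of_nn_integral_abs_le[OF _ this \<open>0 \<le> e\<close>]
  show "integrable M (\<lambda>x. S K x - T x)" "(\<integral>x. \<bar>S K x - T x\<bar> \<partial>M) \<le> e" by simp_all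
qed

lemma L1_Cauchy_imp_L1_limit:
  fixes S :: "nat \<Rightarrow> 'a \<Rightarrow> real"
  assumes int: "\<And>K. integrable M (S K)"
    and Cauchy: "\<And>e. e > 0 \<Longrightarrow> \<exists>N. \<forall>i\<ge>N. \<forall>j\<ge>N. (\<integral>x. \<bar>S i x - S j x\<bar> \<partial>M) < e"
  shows "\<exists>T. integrable M T \<and> (\<lambda>K. \<integral>x. \<bar>S K x - T x\<bar> \<partial>M) \<longlonglongrightarrow> 0"
proof -
  have [measurable]: "S K \<in> borel_measurable M" for K using int by blast
  obtain r where r: "strict_mono r" "AE x in M. Cauchy (\<lambda>i. S (r i) x)"
    using cauchy_L1_AE_cauchy_subseq[of M S] int Cauchy by auto
  define T where "T x = lim (\<lambda>i. S (r i) x)" for x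
  have [measurable]: "T \<in> borel_measurable M" unfolding T_def by measurable
  have lim: "AE x in M. (\<lambda>i. S (r i) x) \<longlonglongrightarrow> T x"
    using r(2) by eventually_elim (simp add: T_def Cauchy_convergent_iff convergent_LIMSEQ_iff)
  have close: "\<exists>N. \<forall>K\<ge>N. integrable M (\<lambda>x. S K x - T x) \<and> (\<integral>x. \<bar>S K x - T x\<bar> \<partial>M) \<le> e"
    if "e > 0" for e
  proof -
    obtain N where "\<And>i j. N \<le> i \<Longrightarrow> N \<le> j \<Longrightarrow> (\<integral>x. \<bar>S i x - S j x\<bar> \<partial>M) < e"
      using Cauchy[OF \<open>e > 0\<close>] by blast
    then have N: "\<And>i j. N \<le> i \<Longrightarrow> N \<le> j \<Longrightarrow> (\<integral>x. \<bar>S i x - S j x\<bar> \<partial>M) \<le> e"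
      by (simp add: less_imp_le)
    have "integrable M (\<lambda>x. S K x - T x) \<and> (\<integral>x. \<bar>S K x - T x\<bar> \<partial>M) \<le> e" if "N \<le> K" for K
      using L1_dist_le_of_AE_subseq_tendsto[OF int _ r(1) lim N that] \<open>e > 0\<close> by simp
    then show ?thesis by blast
  qed
  have "integrable M T"
  proof -
    obtain N where "integrable M (\<lambda>x. S N x - T x)" using close[of 1] by auto
    from Bochner_Integration.integrable_diff[OF int[of N] this] show ?thesis by simp
  qed
  moreover have "(\<lambda>K. \<integral>x. \<bar>S K x - T x\<bar> \<partial>M) \<longlonglongrightarrow> 0"
  proof (rule LIMSEQ_I)
    fix e :: real assume "e > 0"
    then obtain N where "\<forall>K\<ge>N. (\<integral>x. \<bar>S K x - T x\<bar> \<partial>M) \<le> e / 2"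
      using close[of "e / 2"] by auto
    then show "\<exists>N. \<forall>K\<ge>N. norm ((\<integral>x. \<bar>S K x - T x\<bar> \<partial>M) - 0) < e"
      using \<open>e > 0\<close> by (auto intro!: exI[of _ N])
  qed
  ultimately show ?thesis by blast
qed

section \<open>Gaussian scale mixtures\<close>

lemma prob_space_std_normal_measure: "prob_space std_normal_measure"
  unfolding std_normal_measure_def by (rule prob_space_normal_density) simp

lemma sets_std_normal_measure [simp, measurable_cong]: "sets std_normal_measure = sets borel"
  by (simp add: std_normal_measure_def)

lemma space_std_normal_measure [simp]: "space std_normal_measure = UNIV"
  by (simp add: std_normal_measure_def)

lemma distributed_std_normal_measure: "distributed std_normal_measure lborel (\<lambda>w. w) std_normal_density"
  unfolding distributed_def std_normal_measure_def by (auto intro!: distr_id2)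

lemma nn_integral_std_normal_measure:
  assumes [measurable]: "f \<in> borel_measurable borel"
  shows "(\<integral>\<^sup>+w. f w \<partial>std_normal_measure) = (\<integral>\<^sup>+w. ennreal (std_normal_density w) * f w \<partial>lborel)"
  unfolding std_normal_measure_def by (subst nn_integral_density) auto

lemma integrable_std_normal_abs_power: "integrable std_normal_measure (\<lambda>w. \<bar>w\<bar> ^ k)"
  unfolding std_normal_measure_def
  by (subst integrable_density) (auto simp: integrable_std_normal_moment_abs)

lemma nn_integral_normal_density_eq_1: "0 < s \<Longrightarrow> (\<integral>\<^sup>+x. ennreal (normal_density \<mu> s x) \<partial>lborel) = 1"
  by (subst nn_integral_eq_integral) auto

lemma std_normal_mgf: "(\<integral>\<^sup>+w. ennreal (exp (t * w)) \<partial>std_normal_measure) = ennreal (exp (t\<^sup>2 / 2))"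
proof -
  have "std_normal_density w * exp (t * w) = exp (t\<^sup>2 / 2) * normal_density t 1 w" for w
  proof -
    have "- w\<^sup>2 / 2 + t * w = t\<^sup>2 / 2 + (- (w - t)\<^sup>2 / 2)" by (simp add: power2_eq_square field_simps)
    then show ?thesis by (simp add: normal_density_def exp_add[symmetric] mult_ac)
  qed
  then have "(\<integral>\<^sup>+w. ennreal (exp (t * w)) \<partial>std_normal_measure)
      = (\<integral>\<^sup>+w. ennreal (exp (t\<^sup>2 / 2)) * ennreal (normal_density t 1 w) \<partial>lborel)"
    by (subst nn_integral_std_normal_measure) (auto simp flip: ennreal_mult' intro!: nn_integral_cong)
  also have "\<dots> = ennreal (exp (t\<^sup>2 / 2))"
    by (simp add: nn_integral_cmult nn_integral_normal_density_eq_1)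
  finally show ?thesis .
qed

lemma std_normal_exp_square_quarter:
  "(\<integral>\<^sup>+w. ennreal (exp (w\<^sup>2 / 4)) \<partial>std_normal_measure) = ennreal (sqrt 2)"
proof -
  have "std_normal_density w * exp (w\<^sup>2 / 4) = sqrt 2 * normal_density 0 (sqrt 2) w" for w
  proof -
    have "exp (- w\<^sup>2 / 2) * exp (w\<^sup>2 / 4) = exp (- w\<^sup>2 / 4)" by (simp flip: exp_add)
    moreover have "sqrt (pi * 4) = sqrt 2 * sqrt (pi * 2)" by (simp flip: real_sqrt_mult)
    ultimately show ?thesis by (simp add: normal_density_def mult_ac)
  qed
  then have "(\<integral>\<^sup>+w. ennreal (exp (w\<^sup>2 / 4)) \<partial>std_normal_measure)
      = (\<integral>\<^sup>+w. ennreal (sqrt 2) * ennreal (normal_density 0 (sqrt 2) w) \<partial>lborel)"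
    by (subst nn_integral_std_normal_measure) (auto simp flip: ennreal_mult' intro!: nn_integral_cong)
  also have "\<dots> = ennreal (sqrt 2)"
    by (simp add: nn_integral_cmult nn_integral_normal_density_eq_1)
  finally show ?thesis .
qed

definition gauss_nn_expect :: "(real \<Rightarrow> ennreal) \<Rightarrow> real \<Rightarrow> ennreal" where
  "gauss_nn_expect f s = (\<integral>\<^sup>+w. f (sqrt s * w) \<partial>std_normal_measure)"

definition gauss_expect :: "(real \<Rightarrow> real) \<Rightarrow> real \<Rightarrow> real" where
  "gauss_expect f s = (\<integral>w. f (sqrt s * w) \<partial>std_normal_measure)"

lemma abs_gauss_expect_le:
  fixes f :: "real \<Rightarrow> real"
  assumes [measurable]: "f \<in> borel_measurable borel" and bound: "\<And>x. \<bar>f x\<bar> \<le> C"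
  shows "\<bar>gauss_expect f s\<bar> \<le> C"
proof -
  interpret N: prob_space std_normal_measure by (rule prob_space_std_normal_measure)
  have "\<bar>gauss_expect f s\<bar> \<le> (\<integral>w. \<bar>f (sqrt s * w)\<bar> \<partial>std_normal_measure)"
    unfolding gauss_expect_def by (rule integral_abs_bound[unfolded real_norm_def])
  also have "\<dots> \<le> (\<integral>w. C \<partial>std_normal_measure)"
    using bound order_trans[OF abs_ge_zero bound[of 0]]
    by (intro integral_mono N.integrable_const_bound[where B=C]) auto
  finally show ?thesis using order_trans[OF abs_ge_zero bound[of 0]] by (simp add: N.prob_space[simplified])
qed

lemma continuous_on_gauss_expect:
  fixes f :: "real \<Rightarrow> real"
  assumes f: "continuous_on UNIV f" and bound: "\<And>x. \<bar>f x\<bar> \<le> C"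
  shows "continuous_on UNIV (gauss_expect f)"
proof -
  interpret N: prob_space std_normal_measure by (rule prob_space_std_normal_measure)
  have [measurable]: "f \<in> borel_measurable borel" by (rule borel_measurable_continuous_onI[OF f])
  have "(\<lambda>n. gauss_expect f (u n)) \<longlonglongrightarrow> gauss_expect f s" if u: "u \<longlonglongrightarrow> s" for u s
    unfolding gauss_expect_def
  proof (rule integral_dominated_convergence[where w="\<lambda>_. C"])
    show "AE w in std_normal_measure. (\<lambda>n. f (sqrt (u n) * w)) \<longlonglongrightarrow> f (sqrt s * w)"
      by (intro always_eventually allI continuous_on_tendsto_compose[OF f] tendsto_intros u) auto
  qed (use bound in auto)
  then show ?thesis
    by (simp add: continuous_on_eq_continuous_at continuous_at_sequentiallyI)
qed

lemma gauss_expect_power: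
  "gauss_expect (\<lambda>x. x ^ k) s = sqrt s ^ k * (\<integral>w. w ^ k \<partial>std_normal_measure)"
  unfolding gauss_expect_def by (simp add: power_mult_distrib)

lemma gauss_nn_expect_abs_power:
  "gauss_nn_expect (\<lambda>x. ennreal (\<bar>x\<bar> ^ k)) s
     = ennreal (\<bar>sqrt s\<bar> ^ k * (\<integral>w. \<bar>w\<bar> ^ k \<partial>std_normal_measure))"
proof -
  have "gauss_nn_expect (\<lambda>x. ennreal (\<bar>x\<bar> ^ k)) s
      = (\<integral>\<^sup>+w. ennreal (\<bar>sqrt s\<bar> ^ k) * ennreal (\<bar>w\<bar> ^ k) \<partial>std_normal_measure)"
    unfolding gauss_nn_expect_def
    by (intro nn_integral_cong) (simp add: abs_mult power_mult_distrib ennreal_mult)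
  also have "\<dots> = ennreal (\<bar>sqrt s\<bar> ^ k) * ennreal (\<integral>w. \<bar>w\<bar> ^ k \<partial>std_normal_measure)"
    by (simp add: nn_integral_cmult nn_integral_eq_integral integrable_std_normal_abs_power)
  finally show ?thesis by (simp add: ennreal_mult)
qed

lemma gauss_nn_expect_exp:
  "gauss_nn_expect (\<lambda>x. ennreal (exp (t * x))) s = ennreal (exp (t\<^sup>2 * \<bar>s\<bar> / 2))"
proof -
  have "(sqrt s)\<^sup>2 = \<bar>s\<bar>"
  proof (cases "s \<ge> 0")
    case False
    then have "sqrt s = - sqrt (- s)" by (simp add: real_sqrt_minus)
    then show ?thesis using False by simp
  qed simp
  moreover have "gauss_nn_expect (\<lambda>x. ennreal (exp (t * x))) s
      = (\<integral>\<^sup>+w. ennreal (exp ((t * sqrt s) * w)) \<partial>std_normal_measure)"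
    unfolding gauss_nn_expect_def by (simp add: mult_ac)
  ultimately show ?thesis by (simp add: std_normal_mgf power_mult_distrib)
qed

context prob_space
begin

lemma indep_vars_reindex:
  assumes "indep_vars M' X (f ` I)" "inj_on f I"
  shows "indep_vars (\<lambda>i. M' (f i)) (\<lambda>i. X (f i)) I"
proof -
  have rv: "\<forall>i\<in>I. random_variable (M' (f i)) (X (f i))"
    using assms(1) unfolding indep_vars_def by auto
  have ind: "indep_sets (\<lambda>i. sigma_sets (space M) {X i -` A \<inter> space M |A. A \<in> sets (M' i)}) (f ` I)"
    using assms(1) unfolding indep_vars_def by auto
  have "indep_sets (\<lambda>i. sigma_sets (space M) {X (f i) -` A \<inter> space M |A. A \<in> sets (M' (f i))}) I"
    unfolding indep_sets_def
  proof (intro conjI ballI allI impI)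
    fix i assume "i \<in> I"
    then show "sigma_sets (space M) {X (f i) -` A \<inter> space M |A. A \<in> sets (M' (f i))} \<subseteq> events"
      using ind unfolding indep_sets_def by auto
  next
    fix J A assume J: "J \<subseteq> I" "J \<noteq> {}" "finite J"
      and A: "A \<in> (\<Pi> j\<in>J. sigma_sets (space M) {X (f j) -` A \<inter> space M |A. A \<in> sets (M' (f j))})"
    define A' where "A' = (\<lambda>j. A (the_inv_into J f j))"
    have inj: "inj_on f J" using assms(2) J(1) inj_on_subset by blast
    have A'f: "A' (f j) = A j" if "j \<in> J" for j
      unfolding A'_def using the_inv_into_f_f[OF inj that] by simp
    have "A' \<in> (\<Pi> j\<in>f ` J. sigma_sets (space M) {X j -` A \<inter> space M |A. A \<in> sets (M' j)})"
      using A A'f by auto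
    moreover have "f ` J \<subseteq> f ` I" "f ` J \<noteq> {}" "finite (f ` J)" using J by auto
    ultimately have "prob (\<Inter>j\<in>f ` J. A' j) = (\<Prod>j\<in>f ` J. prob (A' j))"
      using ind unfolding indep_sets_def by blast
    moreover have "(\<Inter>j\<in>f ` J. A' j) = (\<Inter>j\<in>J. A j)" using A'f by auto
    moreover have "(\<Prod>j\<in>f ` J. prob (A' j)) = (\<Prod>j\<in>J. prob (A j))"
      using A'f inj by (simp add: prod.reindex)
    ultimately show "prob (\<Inter>j\<in>J. A j) = (\<Prod>j\<in>J. prob (A j))" by simp
  qed
  then show ?thesis using rv unfolding indep_vars_def by auto
qed

lemma expectation_tendsto_of_L1_bounded_continuous:
  fixes S :: "nat \<Rightarrow> 'a \<Rightarrow> real" and h :: "real \<Rightarrow> real"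
  assumes int: "\<And>K. integrable M (S K)" "integrable M T"
    and L1: "(\<lambda>K. expectation (\<lambda>x. \<bar>S K x - T x\<bar>)) \<longlonglongrightarrow> 0"
    and h: "continuous_on UNIV h" "\<And>x. \<bar>h x\<bar> \<le> C"
  shows "(\<lambda>K. expectation (\<lambda>x. h (S K x))) \<longlonglongrightarrow> expectation (\<lambda>x. h (T x))"
proof (rule LIMSEQ_subseq_subseqI)
  have [measurable]: "h \<in> borel_measurable borel" by (rule borel_measurable_continuous_onI[OF h(1)])
  have [measurable]: "S K \<in> borel_measurable M" "T \<in> borel_measurable M" for K using int by auto
  fix r :: "nat \<Rightarrow> nat" assume r: "strict_mono r"
  have "(\<lambda>n. expectation (\<lambda>x. norm (S (r n) x - T x))) \<longlonglongrightarrow> 0"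
    using LIMSEQ_subseq_LIMSEQ[OF L1 r] by (simp add: comp_def)
  then obtain r' where r': "strict_mono r'" "AE x in M. (\<lambda>n. S (r (r' n)) x - T x) \<longlonglongrightarrow> 0"
    using tendsto_L1_AE_subseq[of M "\<lambda>n x. S (r n) x - T x"] int by auto
  have "(\<lambda>n. expectation (\<lambda>x. h (S (r (r' n)) x))) \<longlonglongrightarrow> expectation (\<lambda>x. h (T x))"
  proof (rule integral_dominated_convergence[where w="\<lambda>_. C"])
    show "AE x in M. (\<lambda>n. h (S (r (r' n)) x)) \<longlonglongrightarrow> h (T x)"
      using r'(2)
    proof eventually_elim
      case (elim x)
      then have "(\<lambda>n. S (r (r' n)) x) \<longlonglongrightarrow> T x" by (simp add: LIM_zero_iff)
      then show ?case by (rule continuous_on_tendsto_compose[OF h(1)]) auto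
    qed
  qed (use h(2) in auto)
  with r' show "\<exists>r'. strict_mono r' \<and> (\<lambda>n. expectation (\<lambda>x. h (S (r (r' n)) x))) \<longlonglongrightarrow> expectation (\<lambda>x. h (T x))"
    by blast
qed

lemma integrable_exp_growth:
  fixes H :: "real \<Rightarrow> real"
  assumes "continuous_on UNIV H" and growth: "\<And>x. \<bar>H x\<bar> \<le> A * exp (c * \<bar>x\<bar> / 2)" and "0 \<le> c"
    and [measurable]: "f \<in> borel_measurable M" and int: "integrable M (\<lambda>x. exp (c * \<bar>f x\<bar>))"
  shows "integrable M (\<lambda>x. H (f x))"
proof (rule Bochner_Integration.integrable_bound[OF integrable_mult_right[OF int, of A]])
  have [measurable]: "H \<in> borel_measurable borel" by (rule borel_measurable_continuous_onI[OF assms(1)])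
  show "(\<lambda>x. H (f x)) \<in> borel_measurable M" by simp
  have A: "0 \<le> A" by (rule exp_growth_const_nonneg[OF growth])
  show "AE x in M. norm (H (f x)) \<le> norm (A * exp (c * \<bar>f x\<bar>))"
  proof (intro always_eventually allI)
    fix x
    have "A * exp (c * \<bar>f x\<bar> / 2) \<le> A * exp (c * \<bar>f x\<bar>)"
      using A \<open>0 \<le> c\<close> by (intro mult_left_mono) auto
    then show "norm (H (f x)) \<le> norm (A * exp (c * \<bar>f x\<bar>))"
      using growth[of "f x"] A by simp
  qed
qed

lemma abs_expectation_diff_clip_le:
  fixes H :: "real \<Rightarrow> real"
  assumes "continuous_on UNIV H" and growth: "\<And>x. \<bar>H x\<bar> \<le> A * exp (c * \<bar>x\<bar> / 2)"
    and "0 < c" "0 \<le> R" and [measurable]: "f \<in> borel_measurable M"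
    and int: "integrable M (\<lambda>x. exp (c * \<bar>f x\<bar>))" and bound: "expectation (\<lambda>x. exp (c * \<bar>f x\<bar>)) \<le> D"
  shows "\<bar>expectation (\<lambda>x. H (f x)) - expectation (\<lambda>x. H (clip R (f x)))\<bar> \<le> 2 * A * exp (- c * R / 2) * D"
proof -
  have A: "0 \<le> A" by (rule exp_growth_const_nonneg[OF growth])
  have [measurable]: "H \<in> borel_measurable borel" by (rule borel_measurable_continuous_onI[OF assms(1)])
  have [measurable]: "clip R \<in> borel_measurable borel" by (rule borel_measurable_continuous_onI[OF continuous_on_clip])
  have int_H: "integrable M (\<lambda>x. H (f x))"
    by (rule integrable_exp_growth[OF assms(1) growth]) (use assms in auto)
  have int_H_clip: "integrable M (\<lambda>x. H (clip R (f x)))"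
  proof (rule integrable_const_bound[where B="A * exp (c * R / 2)"])
    show "AE x in M. norm (H (clip R (f x))) \<le> A * exp (c * R / 2)"
    proof (intro always_eventually allI)
      fix x
      have "A * exp (c * \<bar>clip R (f x)\<bar> / 2) \<le> A * exp (c * R / 2)"
        using abs_clip_le[OF \<open>0 \<le> R\<close>, of "f x"] \<open>0 < c\<close> A by (intro mult_left_mono) auto
      then show "norm (H (clip R (f x))) \<le> A * exp (c * R / 2)" using growth[of "clip R (f x)"] by simp
    qed
  qed simp
  have "\<bar>expectation (\<lambda>x. H (f x)) - expectation (\<lambda>x. H (clip R (f x)))\<bar>
      \<le> expectation (\<lambda>x. \<bar>H (f x) - H (clip R (f x))\<bar>)"
    using int_H int_H_clip by (simp flip: Bochner_Integration.integral_diff)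
  also have "\<dots> \<le> expectation (\<lambda>x. 2 * A * exp (- c * R / 2) * exp (c * \<bar>f x\<bar>))"
    using int_H int_H_clip int
    by (intro integral_mono abs_diff_clip_le[OF growth \<open>0 < c\<close> \<open>0 \<le> R\<close>]) auto
  also have "\<dots> \<le> 2 * A * exp (- c * R / 2) * D"
    using A bound by (simp add: mult_left_mono)
  finally show ?thesis .
qed

lemma expectation_tendsto_of_L1_exp_growth:
  fixes S :: "nat \<Rightarrow> 'a \<Rightarrow> real" and H :: "real \<Rightarrow> real"
  assumes int: "\<And>K. integrable M (S K)" "integrable M T"
    and L1: "(\<lambda>K. expectation (\<lambda>x. \<bar>S K x - T x\<bar>)) \<longlonglongrightarrow> 0"
    and "0 < c"
    and exp_S: "\<And>K. integrable M (\<lambda>x. exp (c * \<bar>S K x\<bar>))" "\<And>K. expectation (\<lambda>x. exp (c * \<bar>S K x\<bar>)) \<le> D"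
    and exp_T: "integrable M (\<lambda>x. exp (c * \<bar>T x\<bar>))" "expectation (\<lambda>x. exp (c * \<bar>T x\<bar>)) \<le> D"
    and H: "continuous_on UNIV H" and growth: "\<And>x. \<bar>H x\<bar> \<le> A * exp (c * \<bar>x\<bar> / 2)"
  shows "(\<lambda>K. expectation (\<lambda>x. H (S K x))) \<longlonglongrightarrow> expectation (\<lambda>x. H (T x))"
proof (rule LIMSEQ_I)
  \<comment> \<open>Clip at a level R where the exponential moments make the tails negligible.\<close>
  fix e :: real assume "e > 0"
  have meas[measurable]: "S K \<in> borel_measurable M" "T \<in> borel_measurable M" for K
    using int by auto
  have A: "0 \<le> A" by (rule exp_growth_const_nonneg[OF growth])
  have "0 \<le> expectation (\<lambda>x. exp (c * \<bar>T x\<bar>))" by (intro integral_nonneg_AE) auto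
  with exp_T(2) have D: "0 \<le> D" by linarith
  define R where "R = 2 / c * ln (6 * A * D / e + 1)"
  have R: "0 \<le> R" using A D \<open>e > 0\<close> \<open>0 < c\<close> by (simp add: R_def)
  have tail: "2 * A * exp (- c * R / 2) * D < e / 3"
  proof -
    have q: "0 < 6 * A * D / e + 1" using A D \<open>e > 0\<close> by (simp add: add_nonneg_pos)
    have "exp (- c * R / 2) = 1 / (6 * A * D / e + 1)"
      using q \<open>0 < c\<close> by (simp add: R_def exp_minus exp_ln inverse_eq_divide)
    then have "2 * A * exp (- c * R / 2) * D = 2 * A * D / (6 * A * D / e + 1)" by simp
    also have "\<dots> < e / 3"
      unfolding pos_divide_less_eq[OF q] using \<open>e > 0\<close> by (simp add: field_simps)
    finally show ?thesis .
  qed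
  have "(\<lambda>K. expectation (\<lambda>x. H (clip R (S K x)))) \<longlonglongrightarrow> expectation (\<lambda>x. H (clip R (T x)))"
  proof (rule expectation_tendsto_of_L1_bounded_continuous[OF int L1])
    show "continuous_on UNIV (\<lambda>x. H (clip R x))"
      by (rule continuous_on_compose2[OF H continuous_on_clip]) auto
    show "\<bar>H (clip R x)\<bar> \<le> A * exp (c * R / 2)" for x
      using growth[of "clip R x"] abs_clip_le[OF R, of x] \<open>0 < c\<close> A
      by (smt (verit, best) divide_right_mono exp_le_cancel_iff mult_left_mono)
  qed
  then obtain N where N: "\<And>K. K \<ge> N \<Longrightarrow>
      \<bar>expectation (\<lambda>x. H (clip R (S K x))) - expectation (\<lambda>x. H (clip R (T x)))\<bar> < e / 3"
    using LIMSEQ_D[of _ _ "e / 3"] \<open>e > 0\<close> by (metis real_norm_def zero_less_divide_iff zero_less_numeral)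
  have "\<bar>expectation (\<lambda>x. H (S K x)) - expectation (\<lambda>x. H (T x))\<bar> < e" if "K \<ge> N" for K
    using abs_expectation_diff_clip_le[OF H growth \<open>0 < c\<close> R meas(1) exp_S(1,2), of K]
      abs_expectation_diff_clip_le[OF H growth \<open>0 < c\<close> R meas(2) exp_T] N[OF that] tail
    by linarith
  then show "\<exists>N. \<forall>K\<ge>N. norm (expectation (\<lambda>x. H (S K x)) - expectation (\<lambda>x. H (T x))) < e"
    by auto
qed

lemma prob_space_normal_mixture:
  assumes [measurable]: "A \<in> borel_measurable M"
  shows "prob_space (normal_mixture M A)"
proof -
  interpret N: prob_space std_normal_measure by (rule prob_space_std_normal_measure)
  interpret MN: pair_prob_space M std_normal_measure ..
  show ?thesis
    unfolding normal_mixture_def by (intro MN.prob_space_distr) simp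
qed

lemma nn_integral_normal_mixture:
  assumes [measurable]: "A \<in> borel_measurable M" "f \<in> borel_measurable borel"
  shows "(\<integral>\<^sup>+y. f y \<partial>normal_mixture M A) = (\<integral>\<^sup>+x. gauss_nn_expect f (A x) \<partial>M)"
proof -
  interpret N: prob_space std_normal_measure by (rule prob_space_std_normal_measure)
  have "(\<integral>\<^sup>+y. f y \<partial>normal_mixture M A)
      = (\<integral>\<^sup>+p. f (case p of (x, w) \<Rightarrow> sqrt (A x) * w) \<partial>(M \<Otimes>\<^sub>M std_normal_measure))"
    unfolding normal_mixture_def by (rule nn_integral_distr) simp_all
  also have "\<dots> = (\<integral>\<^sup>+x. (\<integral>\<^sup>+w. f (sqrt (A x) * w) \<partial>std_normal_measure) \<partial>M)"
    using N.nn_integral_fst[of "\<lambda>p. f (case p of (x, w) \<Rightarrow> sqrt (A x) * w)" M] by simp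
  finally show ?thesis by (simp add: gauss_nn_expect_def)
qed

lemma integral_normal_mixture:
  fixes f :: "real \<Rightarrow> real"
  assumes [measurable]: "A \<in> borel_measurable M" "f \<in> borel_measurable borel"
    and int: "integrable (normal_mixture M A) f"
  shows "(\<integral>y. f y \<partial>normal_mixture M A) = expectation (\<lambda>x. gauss_expect f (A x))"
proof -
  interpret N: prob_space std_normal_measure by (rule prob_space_std_normal_measure)
  interpret MN: pair_prob_space M std_normal_measure ..
  have int': "integrable (M \<Otimes>\<^sub>M std_normal_measure) (\<lambda>p. f (case p of (x, w) \<Rightarrow> sqrt (A x) * w))"
    using int unfolding normal_mixture_def by (subst (asm) integrable_distr_eq) simp_all
  have "(\<integral>y. f y \<partial>normal_mixture M A)
      = (\<integral>p. f (case p of (x, w) \<Rightarrow> sqrt (A x) * w) \<partial>(M \<Otimes>\<^sub>M std_normal_measure))"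
    unfolding normal_mixture_def by (rule integral_distr) simp_all
  also have "\<dots> = expectation (\<lambda>x. \<integral>w. f (sqrt (A x) * w) \<partial>std_normal_measure)"
    using MN.integral_fst'[OF int'] by simp
  finally show ?thesis by (simp add: gauss_expect_def)
qed

lemma integrable_normal_mixture_power:
  assumes [measurable]: "A \<in> borel_measurable M"
    and "0 < c" and exp_A: "integrable M (\<lambda>x. exp (c * \<bar>A x\<bar>))"
  shows "integrable (normal_mixture M A) (\<lambda>y. y ^ k)"
proof (rule integrableI_bounded)
  define m where "m = (\<integral>w. \<bar>w\<bar> ^ k \<partial>std_normal_measure)"
  define C where "C = (2 / c) ^ k * fact k * exp (c / 2)"
  have C: "0 \<le> C" and m: "0 \<le> m" using \<open>0 < c\<close> by (simp_all add: C_def m_def)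
  have "(\<integral>\<^sup>+y. ennreal (norm (y ^ k)) \<partial>normal_mixture M A)
      = (\<integral>\<^sup>+x. gauss_nn_expect (\<lambda>y. ennreal (\<bar>y\<bar> ^ k)) (A x) \<partial>M)"
    by (simp add: nn_integral_normal_mixture power_abs)
  also have "\<dots> \<le> (\<integral>\<^sup>+x. ennreal (C * m) * ennreal (exp (c * \<bar>A x\<bar>)) \<partial>M)"
  proof (intro nn_integral_mono)
    fix x
    have "\<bar>sqrt (A x)\<bar> ^ k \<le> C * exp (c * \<bar>A x\<bar> / 2)"
      using abs_sqrt_power_le_exp[OF \<open>0 < c\<close>] by (simp add: C_def power_abs)
    also have "\<dots> \<le> C * exp (c * \<bar>A x\<bar>)"
      using C \<open>0 < c\<close> by (intro mult_left_mono) auto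
    finally have "m * \<bar>sqrt (A x)\<bar> ^ k \<le> m * (C * exp (c * \<bar>A x\<bar>))" by (rule mult_left_mono[OF _ m])
    moreover have eq: "ennreal (C * m) * ennreal (exp (c * \<bar>A x\<bar>)) = ennreal (C * m * exp (c * \<bar>A x\<bar>))"
      using C m by (simp add: ennreal_mult)
    ultimately show "gauss_nn_expect (\<lambda>y. ennreal (\<bar>y\<bar> ^ k)) (A x) \<le> ennreal (C * m) * ennreal (exp (c * \<bar>A x\<bar>))"
      unfolding gauss_nn_expect_abs_power m_def[symmetric] eq by (intro ennreal_leI) (simp add: mult_ac)
  qed
  also have "\<dots> < \<infinity>"
    using exp_A unfolding integrable_iff_bounded by (simp add: nn_integral_cmult ennreal_mult_less_top)
  finally show "(\<integral>\<^sup>+y. ennreal (norm (y ^ k)) \<partial>normal_mixture M A) < \<infinity>" .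
qed (simp add: normal_mixture_def)

lemma integrable_normal_mixture_exp:
  assumes [measurable]: "A \<in> borel_measurable M"
    and "0 < c" and exp_A: "integrable M (\<lambda>x. exp (c * \<bar>A x\<bar>))"
  shows "\<exists>\<delta>>0. \<forall>t\<in>{-\<delta><..<\<delta>}. integrable (normal_mixture M A) (\<lambda>y. exp (t * y))"
proof (intro exI[of _ "sqrt c"] conjI ballI)
  show "sqrt c > 0" using \<open>0 < c\<close> by simp
  fix t assume "t \<in> {- sqrt c<..<sqrt c}"
  then have "\<bar>t\<bar> < sqrt c" by auto
  then have "t\<^sup>2 \<le> c"
    using \<open>0 < c\<close> by (metis abs_ge_zero less_imp_le power2_abs real_sqrt_abs real_sqrt_less_iff)
  show "integrable (normal_mixture M A) (\<lambda>y. exp (t * y))"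
  proof (rule integrableI_bounded)
    have "(\<integral>\<^sup>+y. ennreal (norm (exp (t * y))) \<partial>normal_mixture M A)
        = (\<integral>\<^sup>+x. gauss_nn_expect (\<lambda>y. ennreal (exp (t * y))) (A x) \<partial>M)"
      by (simp add: nn_integral_normal_mixture)
    also have "\<dots> \<le> (\<integral>\<^sup>+x. ennreal (exp (c * \<bar>A x\<bar>)) \<partial>M)"
      unfolding gauss_nn_expect_exp
    proof (intro nn_integral_mono ennreal_leI)
      fix x
      have "t\<^sup>2 * \<bar>A x\<bar> \<le> c * \<bar>A x\<bar>" using \<open>t\<^sup>2 \<le> c\<close> by (rule mult_right_mono) simp
      moreover have "0 \<le> c * \<bar>A x\<bar>" using \<open>0 < c\<close> by simp
      ultimately show "exp (t\<^sup>2 * \<bar>A x\<bar> / 2) \<le> exp (c * \<bar>A x\<bar>)" by simp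
    qed
    also have "\<dots> < \<infinity>" using exp_A unfolding integrable_iff_bounded by simp
    finally show "(\<integral>\<^sup>+y. ennreal (norm (exp (t * y))) \<partial>normal_mixture M A) < \<infinity>" .
  qed (simp add: normal_mixture_def)
qed

lemma distr_sum_indep_std_normal:
  fixes Z :: "'i \<Rightarrow> 'a \<Rightarrow> real"
  assumes indep: "indep_vars (\<lambda>_. borel) Z J" and "finite J"
    and normal: "\<And>v. v \<in> J \<Longrightarrow> distributed M lborel (Z v) std_normal_density"
  shows "distr M borel (\<lambda>x. \<Sum>v\<in>J. c v * Z v x)
           = distr std_normal_measure borel (\<lambda>w. sqrt (\<Sum>v\<in>J. (c v)\<^sup>2) * w)"
proof -
  interpret N: prob_space std_normal_measure by (rule prob_space_std_normal_measure)
  define J' where "J' = {v\<in>J. c v \<noteq> 0}"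
  have J': "finite J'" "J' \<subseteq> J" using \<open>finite J\<close> by (auto simp: J'_def)
  have sum_J': "(\<Sum>v\<in>J. c v * Z v x) = (\<Sum>v\<in>J'. c v * Z v x)" for x
    unfolding J'_def by (rule sum.mono_neutral_right) (use \<open>finite J\<close> in auto)
  have sum_sq_J': "(\<Sum>v\<in>J. (c v)\<^sup>2) = (\<Sum>v\<in>J'. (c v)\<^sup>2)"
    unfolding J'_def by (rule sum.mono_neutral_right) (use \<open>finite J\<close> in auto)
  show ?thesis
  proof (cases "J' = {}")
    case True
    then show ?thesis unfolding sum_J' sum_sq_J' by simp
  next
    case False
    have scaled: "distributed M lborel (\<lambda>x. c v * Z v x) (normal_density 0 \<bar>c v\<bar>)" if "v \<in> J'" for v
    proof -
      have "distributed M lborel (\<lambda>x. 0 + c v * Z v x) (normal_density (0 + c v * 0) (\<bar>c v\<bar> * 1))"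
        using that J' by (intro normal_density_affine normal) (auto simp: J'_def)
      then show ?thesis by simp
    qed
    have "indep_vars (\<lambda>_. borel) (\<lambda>v x. c v * Z v x) J'"
      by (rule indep_vars_compose2[OF indep_vars_subset[OF indep J'(2)]]) simp
    from sum_indep_normal[OF J'(1) False this _ scaled]
    have sum: "distributed M lborel (\<lambda>x. \<Sum>v\<in>J'. c v * Z v x) (normal_density 0 (sqrt (\<Sum>v\<in>J'. (c v)\<^sup>2)))"
      by (simp add: J'_def)
    define s where "s = sqrt (\<Sum>v\<in>J'. (c v)\<^sup>2)"
    have "s > 0"
      unfolding s_def using False J'(1) by (intro real_sqrt_gt_zero sum_pos) (auto simp: J'_def)
    then have "distributed std_normal_measure lborel (\<lambda>w. 0 + s * w) (normal_density (0 + s * 0) (\<bar>s\<bar> * 1))"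
      by (intro N.normal_density_affine distributed_std_normal_measure) auto
    with sum \<open>s > 0\<close> have "distr M lborel (\<lambda>x. \<Sum>v\<in>J'. c v * Z v x) = distr std_normal_measure lborel (\<lambda>w. s * w)"
      unfolding distributed_def by (simp add: s_def)
    then show ?thesis unfolding sum_J' sum_sq_J' s_def[symmetric]
      by (metis (no_types) distr_cong sets_lborel)
  qed
qed

lemma nn_integral_indep_var_decouple:
  assumes indep: "indep_var Mx x Mz z" and [measurable]: "F \<in> borel_measurable (Mx \<Otimes>\<^sub>M Mz)"
  shows "(\<integral>\<^sup>+\<omega>. F (x \<omega>, z \<omega>) \<partial>M) = (\<integral>\<^sup>+\<omega>'. (\<integral>\<^sup>+\<omega>. F (x \<omega>', z \<omega>) \<partial>M) \<partial>M)"
proof -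
  have [measurable]: "x \<in> measurable M Mx" "z \<in> measurable M Mz"
    using indep_var_rv1[OF indep] indep_var_rv2[OF indep] by simp_all
  let ?Dx = "distr M Mx x" and ?Dz = "distr M Mz z"
  interpret Dz: prob_space ?Dz by (rule prob_space_distr) simp
  have "(\<integral>\<^sup>+\<omega>. F (x \<omega>, z \<omega>) \<partial>M) = integral\<^sup>N (distr M (Mx \<Otimes>\<^sub>M Mz) (\<lambda>\<omega>. (x \<omega>, z \<omega>))) F"
    by (rule nn_integral_distr[symmetric]) simp_all
  also have "\<dots> = integral\<^sup>N (?Dx \<Otimes>\<^sub>M ?Dz) F"
    using indep unfolding indep_var_distribution_eq by simp
  also have "\<dots> = (\<integral>\<^sup>+\<xi>. (\<integral>\<^sup>+\<zeta>. F (\<xi>, \<zeta>) \<partial>?Dz) \<partial>?Dx)"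
    by (rule Dz.nn_integral_fst[symmetric]) simp
  also have "\<dots> = (\<integral>\<^sup>+\<omega>'. (\<integral>\<^sup>+\<zeta>. F (x \<omega>', \<zeta>) \<partial>?Dz) \<partial>M)"
    by (rule nn_integral_distr) (simp_all add: Dz.borel_measurable_nn_integral_fst)
  also have "\<dots> = (\<integral>\<^sup>+\<omega>'. (\<integral>\<^sup>+\<omega>. F (x \<omega>', z \<omega>) \<partial>M) \<partial>M)"
    by (intro nn_integral_cong nn_integral_distr) simp_all
  finally show ?thesis .
qed

lemma nn_integral_exp_mult_centered_le:
  assumes [measurable]: "Y \<in> borel_measurable M"
    and bound: "AE x in M. \<bar>Y x\<bar> \<le> b" and mean: "expectation Y = 0"
  shows "(\<integral>\<^sup>+x. ennreal (exp (l * Y x)) \<partial>M) \<le> ennreal (exp (l\<^sup>2 * b\<^sup>2 / 2))"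
proof -
  have width: "(b - - b)\<^sup>2 / 8 = b\<^sup>2 / 2" by (simp add: power2_eq_square field_simps)
  have Y: "interval_bounded_random_variable M Y (- b) b"
    by unfold_locales (use bound in \<open>auto elim: eventually_mono\<close>)
  have minus_Y: "interval_bounded_random_variable M (\<lambda>x. - Y x) (- b) b"
    by unfold_locales (use bound in \<open>auto elim: eventually_mono\<close>)
  consider "l > 0" | "l < 0" | "l = 0" by linarith
  then show ?thesis
  proof cases
    case 1
    from interval_bounded_random_variable.Hoeffdings_lemma_nn_integral_0[OF Y 1 mean]
    show ?thesis by (simp only: times_divide_eq_right[symmetric] width)
  next
    case 2
    then have "- l > 0" by simp
    from interval_bounded_random_variable.Hoeffdings_lemma_nn_integral_0[OF minus_Y this]
    show ?thesis using mean by (simp only: times_divide_eq_right[symmetric] width minus_mult_minus power2_minus integral_minus neg_equal_0_iff_equal)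
  qed (simp add: emeasure_space_1)
qed

lemma nn_integral_exp_mult_sum_indep_le:
  assumes indep: "indep_vars (\<lambda>_. borel) Y N" and "finite N"
    and [measurable]: "\<And>u. Y u \<in> borel_measurable M"
    and bound: "\<And>u. u \<in> N \<Longrightarrow> AE x in M. \<bar>Y u x\<bar> \<le> b"
    and mean: "\<And>u. u \<in> N \<Longrightarrow> expectation (Y u) = 0"
  shows "(\<integral>\<^sup>+x. ennreal (exp (l * (\<Sum>u\<in>N. Y u x))) \<partial>M) \<le> ennreal (exp (l\<^sup>2 * card N * b\<^sup>2 / 2))"
proof -
  have "(\<integral>\<^sup>+x. ennreal (exp (l * (\<Sum>u\<in>N. Y u x))) \<partial>M) = (\<integral>\<^sup>+x. (\<Prod>u\<in>N. ennreal (exp (l * Y u x))) \<partial>M)"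
    using \<open>finite N\<close> by (intro nn_integral_cong) (simp add: sum_distrib_left exp_sum prod_ennreal)
  also have "\<dots> = (\<Prod>u\<in>N. \<integral>\<^sup>+x. ennreal (exp (l * Y u x)) \<partial>M)"
    by (intro indep_vars_nn_integral \<open>finite N\<close> indep_vars_compose2[OF indep]) simp_all
  also have "\<dots> \<le> (\<Prod>u\<in>N. ennreal (exp (l\<^sup>2 * b\<^sup>2 / 2)))"
    by (intro prod_mono_ennreal nn_integral_exp_mult_centered_le bound mean) simp_all
  also have "\<dots> = ennreal (exp (l\<^sup>2 * card N * b\<^sup>2 / 2))"
  proof -
    have "exp (l\<^sup>2 * card N * b\<^sup>2 / 2) = exp (l\<^sup>2 * b\<^sup>2 / 2) ^ card N"
      by (simp add: exp_of_nat_mult[symmetric] mult_ac)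
    then show ?thesis by (simp only: prod_constant ennreal_power[OF exp_ge_zero])
  qed
  finally show ?thesis .
qed

lemma nn_integral_exp_square_sum_indep_le:
  fixes b :: real
  assumes indep: "indep_vars (\<lambda>_. borel) Y N" and "finite N" "N \<noteq> {}" "0 < b"
    and [measurable]: "\<And>u. Y u \<in> borel_measurable M"
    and bound: "\<And>u. u \<in> N \<Longrightarrow> AE x in M. \<bar>Y u x\<bar> \<le> b"
    and mean: "\<And>u. u \<in> N \<Longrightarrow> expectation (Y u) = 0"
  shows "(\<integral>\<^sup>+x. ennreal (exp ((\<Sum>u\<in>N. Y u x)\<^sup>2 / (4 * b\<^sup>2 * card N))) \<partial>M) \<le> ennreal (sqrt 2)"
proof -
  \<comment> \<open>Write the Gaussian exponential moment as a mixture of linear ones and apply Hoeffding inside.\<close>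
  interpret N: prob_space std_normal_measure by (rule prob_space_std_normal_measure)
  interpret MN: pair_prob_space M std_normal_measure ..
  define n where "n = real (card N)"
  have "n > 0" using assms(2,3) by (simp add: n_def card_gt_0_iff)
  define c where "c = 1 / (b * sqrt (2 * n))"
  have c: "c\<^sup>2 / 2 = 1 / (4 * b\<^sup>2 * n)"
    using \<open>n > 0\<close> \<open>0 < b\<close> by (simp add: c_def power2_eq_square field_simps)
  let ?s = "\<lambda>x. \<Sum>u\<in>N. Y u x"
  have "(\<integral>\<^sup>+x. ennreal (exp ((?s x)\<^sup>2 / (4 * b\<^sup>2 * card N))) \<partial>M)
      = (\<integral>\<^sup>+x. (\<integral>\<^sup>+w. ennreal (exp ((c * w) * ?s x)) \<partial>std_normal_measure) \<partial>M)"
  proof (intro nn_integral_cong)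
    fix x
    have "(\<integral>\<^sup>+w. ennreal (exp ((c * w) * ?s x)) \<partial>std_normal_measure) = ennreal (exp ((c * ?s x)\<^sup>2 / 2))"
      using std_normal_mgf[of "c * ?s x"] by (simp add: mult_ac)
    also have "(c * ?s x)\<^sup>2 / 2 = (?s x)\<^sup>2 / (4 * b\<^sup>2 * card N)"
      using c by (simp add: power_mult_distrib n_def field_simps)
    finally show "ennreal (exp ((?s x)\<^sup>2 / (4 * b\<^sup>2 * card N)))
        = (\<integral>\<^sup>+w. ennreal (exp ((c * w) * ?s x)) \<partial>std_normal_measure)" by simp
  qed
  also have "\<dots> = (\<integral>\<^sup>+w. (\<integral>\<^sup>+x. ennreal (exp ((c * w) * ?s x)) \<partial>M) \<partial>std_normal_measure)"
    by (rule MN.Fubini'[symmetric]) measurable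
  also have "\<dots> \<le> (\<integral>\<^sup>+w. ennreal (exp ((c * w)\<^sup>2 * card N * b\<^sup>2 / 2)) \<partial>std_normal_measure)"
    by (intro nn_integral_mono nn_integral_exp_mult_sum_indep_le indep \<open>finite N\<close> bound mean) simp
  also have "\<dots> = (\<integral>\<^sup>+w. ennreal (exp (w\<^sup>2 / 4)) \<partial>std_normal_measure)"
  proof (intro nn_integral_cong)
    fix w
    have "(c * w)\<^sup>2 * card N * b\<^sup>2 / 2 = w\<^sup>2 * (c\<^sup>2 / 2 * n * b\<^sup>2)"
      by (simp add: n_def power_mult_distrib)
    also have "\<dots> = w\<^sup>2 / 4" using c \<open>n > 0\<close> \<open>0 < b\<close> by simp
    finally show "ennreal (exp ((c * w)\<^sup>2 * card N * b\<^sup>2 / 2)) = ennreal (exp (w\<^sup>2 / 4))" by simp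
  qed
  also have "\<dots> = ennreal (sqrt 2)" by (rule std_normal_exp_square_quarter)
  finally show ?thesis .
qed

lemma nn_integral_exp_subconvex_le:
  fixes p :: "'i \<Rightarrow> real" and y :: "'i \<Rightarrow> 'a \<Rightarrow> real"
  assumes "finite V" and p: "\<And>v. v \<in> V \<Longrightarrow> 0 \<le> p v" "sum p V \<le> 1"
    and [measurable]: "\<And>v. y v \<in> borel_measurable M"
    and bound: "\<And>v. v \<in> V \<Longrightarrow> (\<integral>\<^sup>+x. ennreal (exp (y v x)) \<partial>M) \<le> ennreal D" and "1 \<le> D"
  shows "(\<integral>\<^sup>+x. ennreal (exp (\<Sum>v\<in>V. p v * y v x)) \<partial>M) \<le> ennreal D"
proof -
  let ?s = "sum p V"
  have "(\<integral>\<^sup>+x. ennreal (exp (\<Sum>v\<in>V. p v * y v x)) \<partial>M)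
      \<le> (\<integral>\<^sup>+x. ennreal (1 - ?s) + (\<Sum>v\<in>V. ennreal (p v) * ennreal (exp (y v x))) \<partial>M)"
  proof (intro nn_integral_mono)
    fix x
    have "ennreal (exp (\<Sum>v\<in>V. p v * y v x)) \<le> ennreal ((1 - ?s) + (\<Sum>v\<in>V. p v * exp (y v x)))"
      by (intro ennreal_leI exp_sum_le_subconvex \<open>finite V\<close> p)
    also have "\<dots> = ennreal (1 - ?s) + ennreal (\<Sum>v\<in>V. p v * exp (y v x))"
      using p by (intro ennreal_plus) (auto intro: sum_nonneg)
    also have "ennreal (\<Sum>v\<in>V. p v * exp (y v x)) = (\<Sum>v\<in>V. ennreal (p v) * ennreal (exp (y v x)))"
      using p by (subst sum_ennreal[symmetric]) (auto simp: ennreal_mult)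
    finally show "ennreal (exp (\<Sum>v\<in>V. p v * y v x))
        \<le> ennreal (1 - ?s) + (\<Sum>v\<in>V. ennreal (p v) * ennreal (exp (y v x)))" .
  qed
  also have "\<dots> = ennreal (1 - ?s) + (\<Sum>v\<in>V. ennreal (p v) * (\<integral>\<^sup>+x. ennreal (exp (y v x)) \<partial>M))"
    by (simp add: nn_integral_add nn_integral_sum nn_integral_cmult emeasure_space_1)
  also have "\<dots> \<le> ennreal (1 - ?s) + (\<Sum>v\<in>V. ennreal (p v) * ennreal D)"
    by (intro add_left_mono sum_mono mult_left_mono bound) auto
  also have "\<dots> = ennreal ((1 - ?s) + ?s * D)"
    using p \<open>1 \<le> D\<close> by (simp add: sum_nonneg sum_ennreal sum_distrib_right ennreal_plus flip: ennreal_mult)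
  also have "\<dots> \<le> ennreal D"
  proof (intro ennreal_leI)
    have "(1 - ?s) * 1 \<le> (1 - ?s) * D" using p \<open>1 \<le> D\<close> by (intro mult_left_mono) auto
    then show "(1 - ?s) + ?s * D \<le> D" by (simp add: algebra_simps)
  qed
  finally show ?thesis .
qed

end

section \<open>The co-degree model\<close>

lemma sum_degree_eq_twice_num_edges:
  assumes "simple_graph_on n E"
  shows "(\<Sum>u\<in>{1..n}. degree n E u) = 2 * num_edges n E"
proof -
  let ?L = "{(u, v). u \<in> {1..n} \<and> v \<in> {1..n} \<and> u < v \<and> E u v}"
  let ?R = "{(u, v). u \<in> {1..n} \<and> v \<in> {1..n} \<and> v < u \<and> E u v}"
  have sym: "E u v \<Longrightarrow> E v u" and irr: "\<not> E u u" for u v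
    using assms unfolding simple_graph_on_def by auto
  have "(\<Sum>u\<in>{1..n}. degree n E u) = card (SIGMA u:{1..n}. {v \<in> {1..n}. E u v})"
    unfolding degree_def by (rule card_SigmaI[symmetric]) auto
  also have "(SIGMA u:{1..n}. {v \<in> {1..n}. E u v}) = ?L \<union> ?R"
    using irr by (auto dest: not_less_iff_gr_or_eq[THEN iffD1])
  also have "card (?L \<union> ?R) = card ?L + card ?R"
    by (rule card_Un_disjoint) (auto intro: finite_subset[of _ "{1..n} \<times> {1..n}"])
  also have "card ?R = card ?L"
  proof -
    have "?R = (\<lambda>(u, v). (v, u)) ` ?L" using sym by (auto simp: image_iff)
    moreover have "inj_on (\<lambda>(u, v). (v, u)) ?L" by (auto simp: inj_on_def)
    ultimately show ?thesis by (simp add: card_image)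
  qed
  finally show ?thesis by (simp add: num_edges_def)
qed

locale codegree_model =
  fixes P :: "'a measure"
    and X Z :: "nat \<Rightarrow> 'a \<Rightarrow> real"
    and G :: "nat \<Rightarrow> nat \<Rightarrow> nat \<Rightarrow> bool"
    and \<sigma> :: "nat \<Rightarrow> nat \<Rightarrow> real"
    and M :: real
  assumes prob_space_P: "prob_space P"
    and measurable_X [measurable]: "\<And>i. X i \<in> borel_measurable P"
    and measurable_Z [measurable]: "\<And>i. Z i \<in> borel_measurable P"
    and indep: "prob_space.indep_vars P (\<lambda>_. borel) (case_sum X Z) ({1..} <+> {1..})"
    and ident: "\<And>i. 1 \<le> i \<Longrightarrow> distr P borel (X i) = distr P borel (X 1)"
    and normal_Z: "\<And>i. 1 \<le> i \<Longrightarrow> distributed P lborel (Z i) std_normal_density"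
    and graphs: "\<And>n. in_graph_class n (G n)"
    and edges: "filterlim (\<lambda>n. real (num_edges n (G n))) at_top sequentially"
    and codeg: "codegree_condition G \<sigma>"
    and trunc_var_pos: "trunc_var P (X 1) M > 0"

sublocale codegree_model \<subseteq> prob_space P
  by (rule prob_space_P)

context codegree_model
begin

definition std_trunc :: "real \<Rightarrow> real" where
  "std_trunc r = (r * indicator {x. \<bar>x\<bar> \<le> M} r - trunc_mean P (X 1) M) / sqrt (trunc_var P (X 1) M)"

abbreviation Xt :: "nat \<Rightarrow> 'a \<Rightarrow> real" where
  "Xt \<equiv> XM P X M"

text \<open>The summand 1 only serves to make the bound positive.\<close>

definition Xt_bound :: real where
  "Xt_bound = (\<bar>M\<bar> + \<bar>trunc_mean P (X 1) M\<bar>) / sqrt (trunc_var P (X 1) M) + 1"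

lemma measurable_std_trunc [measurable]: "std_trunc \<in> borel_measurable borel"
  unfolding std_trunc_def by measurable

lemma Xt_eq: "Xt u = (\<lambda>\<omega>. std_trunc (X u \<omega>))"
  by (simp add: fun_eq_iff XM_def std_trunc_def)

lemma measurable_Xt [measurable]: "Xt u \<in> borel_measurable P"
  unfolding Xt_eq by measurable

lemma Xt_bound_pos: "0 < Xt_bound"
  using trunc_var_pos by (simp add: Xt_bound_def add_nonneg_pos)

lemma abs_Xt_le: "\<bar>Xt u \<omega>\<bar> \<le> Xt_bound"
proof -
  have "\<bar>X u \<omega> * indicator {x. \<bar>x\<bar> \<le> M} (X u \<omega>) - trunc_mean P (X 1) M\<bar> \<le> \<bar>M\<bar> + \<bar>trunc_mean P (X 1) M\<bar>"
    by (auto simp: indicator_def)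
  then have "\<bar>X u \<omega> * indicator {x. \<bar>x\<bar> \<le> M} (X u \<omega>) - trunc_mean P (X 1) M\<bar> / sqrt (trunc_var P (X 1) M)
      \<le> (\<bar>M\<bar> + \<bar>trunc_mean P (X 1) M\<bar>) / sqrt (trunc_var P (X 1) M)"
    using trunc_var_pos by (intro divide_right_mono) simp_all
  moreover have "\<bar>Xt u \<omega>\<bar> = \<bar>X u \<omega> * indicator {x. \<bar>x\<bar> \<le> M} (X u \<omega>) - trunc_mean P (X 1) M\<bar> / sqrt (trunc_var P (X 1) M)"
    using trunc_var_pos by (simp add: XM_def abs_div)
  ultimately show ?thesis by (simp add: Xt_bound_def)
qed

lemma integrable_bounded:
  fixes f :: "'a \<Rightarrow> real"
  assumes [measurable]: "f \<in> borel_measurable P" and "\<And>\<omega>. \<bar>f \<omega>\<bar> \<le> C"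
  shows "integrable P f"
  by (rule integrable_const_bound[where B=C]) (use assms in auto)

lemma integrable_Xt: "integrable P (Xt u)"
  by (rule integrable_bounded[OF _ abs_Xt_le]) simp

lemma integrable_Xt_mult: "integrable P (\<lambda>\<omega>. Xt u \<omega> * Xt v \<omega>)"
  by (rule integrable_bounded[where C="Xt_bound * Xt_bound"])
     (auto simp: abs_mult intro!: mult_mono' abs_Xt_le)

lemma expectation_ident:
  fixes g :: "real \<Rightarrow> real"
  assumes "1 \<le> u" and [measurable]: "g \<in> borel_measurable borel"
  shows "expectation (\<lambda>\<omega>. g (X u \<omega>)) = expectation (\<lambda>\<omega>. g (X 1 \<omega>))"
proof -
  have "expectation (\<lambda>\<omega>. g (X u \<omega>)) = integral\<^sup>L (distr P borel (X u)) g"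
    by (rule integral_distr[symmetric]) auto
  also have "\<dots> = integral\<^sup>L (distr P borel (X 1)) g" using ident[OF assms(1)] by simp
  also have "\<dots> = expectation (\<lambda>\<omega>. g (X 1 \<omega>))" by (rule integral_distr) auto
  finally show ?thesis .
qed

lemma expectation_Xt: "1 \<le> u \<Longrightarrow> expectation (Xt u) = 0"
proof -
  assume "1 \<le> u"
  have int: "integrable P (\<lambda>\<omega>. X 1 \<omega> * indicator {x. \<bar>x\<bar> \<le> M} (X 1 \<omega>))"
    by (rule integrable_bounded[where C="\<bar>M\<bar>"]) (auto simp: indicator_def)
  have "expectation (Xt u) = expectation (\<lambda>\<omega>. std_trunc (X 1 \<omega>))"
    unfolding Xt_eq by (rule expectation_ident[OF \<open>1 \<le> u\<close>]) simp
  also have "\<dots> = 0"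
    using int by (simp add: std_trunc_def trunc_mean_def prob_space)
  finally show ?thesis .
qed

lemma expectation_Xt_square: "1 \<le> u \<Longrightarrow> expectation (\<lambda>\<omega>. (Xt u \<omega>)\<^sup>2) = 1"
proof -
  assume "1 \<le> u"
  have "expectation (\<lambda>\<omega>. (Xt u \<omega>)\<^sup>2) = expectation (\<lambda>\<omega>. (std_trunc (X 1 \<omega>))\<^sup>2)"
    unfolding Xt_eq by (rule expectation_ident[OF \<open>1 \<le> u\<close>]) simp
  also have "\<dots> = trunc_var P (X 1) M / trunc_var P (X 1) M"
    using trunc_var_pos by (simp add: std_trunc_def power_divide trunc_var_def trunc_mean_def)
  also have "\<dots> = 1" using trunc_var_pos by simp
  finally show ?thesis .
qed

lemma indep_vars_X: "indep_vars (\<lambda>_. borel) X {1..}"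
  using indep_vars_reindex[OF indep_vars_subset[OF indep], of Inl "{1..}"] by auto

lemma indep_vars_Z: "indep_vars (\<lambda>_. borel) Z {1..}"
  using indep_vars_reindex[OF indep_vars_subset[OF indep], of Inr "{1..}"] by auto

lemma indep_vars_Xt: "indep_vars (\<lambda>_. borel) Xt {1..}"
  unfolding Xt_eq by (rule indep_vars_compose2[OF indep_vars_X]) simp

lemma expectation_Xt_mult:
  assumes "1 \<le> u" "1 \<le> v"
  shows "expectation (\<lambda>\<omega>. Xt u \<omega> * Xt v \<omega>) = (if u = v then 1 else 0)"
proof (cases "u = v")
  case True
  then show ?thesis using expectation_Xt_square[OF assms(1)] by (simp add: power2_eq_square)
next
  case False
  have "expectation (\<lambda>\<omega>. \<Prod>i\<in>{u, v}. Xt i \<omega>) = (\<Prod>i\<in>{u, v}. expectation (Xt i))"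
    using assms by (intro indep_vars_lebesgue_integral indep_vars_subset[OF indep_vars_Xt] integrable_Xt) auto
  then show ?thesis using False expectation_Xt assms by simp
qed

lemma expectation_lin_comb_Xt_square:
  assumes "finite U" "U \<subseteq> {1..}"
  shows "expectation (\<lambda>\<omega>. (\<Sum>u\<in>U. c u * Xt u \<omega>)\<^sup>2) = (\<Sum>u\<in>U. (c u)\<^sup>2)"
proof -
  have "expectation (\<lambda>\<omega>. (\<Sum>u\<in>U. c u * Xt u \<omega>)\<^sup>2)
      = (\<Sum>u\<in>U. \<Sum>v\<in>U. c u * c v * expectation (\<lambda>\<omega>. Xt u \<omega> * Xt v \<omega>))"
    by (simp add: power2_eq_square sum_product mult_ac Bochner_Integration.integral_sum
        Bochner_Integration.integrable_sum integrable_Xt_mult)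
  also have "\<dots> = (\<Sum>u\<in>U. \<Sum>v\<in>U. c u * c v * (if u = v then 1 else 0))"
    using assms(2) by (intro sum.cong refl) (auto simp: expectation_Xt_mult subset_eq)
  also have "\<dots> = (\<Sum>u\<in>U. (c u)\<^sup>2)"
    using assms(1) by (simp add: power2_eq_square if_distrib cong: if_cong)
  finally show ?thesis .
qed

definition adj :: "nat \<Rightarrow> nat \<Rightarrow> nat \<Rightarrow> real" where
  "adj n u v = adj_entry (G n) u v"

definition deg :: "nat \<Rightarrow> nat \<Rightarrow> real" where
  "deg n u = (\<Sum>v\<in>{1..n}. adj n u v)"

definition edge_count :: "nat \<Rightarrow> real" where
  "edge_count n = real (num_edges n (G n))"

lemma simple_graph: "simple_graph_on n (G n)"
  using graphs[of n] by (simp add: in_graph_class_def)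

lemma adj_sym: "adj n u v = adj n v u"
  using simple_graph[of n] by (auto simp: adj_def adj_entry_def simple_graph_on_def)

lemma adj_cases: "adj n u v = 0 \<or> adj n u v = 1"
  by (simp add: adj_def adj_entry_def)

lemma adj_nonneg: "0 \<le> adj n u v" and adj_le_1: "adj n u v \<le> 1"
  by (auto simp: adj_def adj_entry_def)

lemma adj_mult_self: "adj n u v * adj n u v = adj n u v"
  using adj_cases[of n u v] by auto

lemma adj_eq_0_outside: "u \<notin> {1..n} \<or> v \<notin> {1..n} \<Longrightarrow> adj n u v = 0"
  using simple_graph[of n] by (auto simp: adj_def adj_entry_def simple_graph_on_def)

lemma edge_count_nonneg: "0 \<le> edge_count n"
  by (simp add: edge_count_def)

lemma edge_count_at_top: "filterlim edge_count at_top sequentially"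
  using edges by (simp add: edge_count_def[abs_def])

lemma eventually_edge_count_pos: "\<forall>\<^sub>F n in sequentially. 0 < edge_count n"
  using edge_count_at_top by (simp add: filterlim_at_top_dense)

lemma deg_nonneg: "0 \<le> deg n u"
  by (simp add: deg_def adj_nonneg sum_nonneg)

lemma sum_deg: "(\<Sum>u\<in>{1..n}. deg n u) = 2 * edge_count n"
proof -
  have "deg n u = real (degree n (G n) u)" for u
  proof -
    have "deg n u = (\<Sum>v\<in>{v\<in>{1..n}. G n u v}. 1)"
      unfolding deg_def adj_def adj_entry_def by (rule sum.inter_filter[symmetric]) simp
    then show ?thesis by (simp add: degree_def)
  qed
  then show ?thesis
    using sum_degree_eq_twice_num_edges[OF simple_graph[of n]]
    by (simp add: edge_count_def flip: of_nat_sum)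
qed

lemma sum_deg_le: "finite U \<Longrightarrow> (\<Sum>u\<in>U. deg n u) \<le> 2 * edge_count n"
proof -
  assume "finite U"
  have "(\<Sum>u\<in>U. deg n u) = (\<Sum>u\<in>U \<inter> {1..n}. deg n u)"
    using \<open>finite U\<close> by (intro sum.mono_neutral_right) (auto simp: deg_def adj_eq_0_outside)
  also have "\<dots> \<le> (\<Sum>u\<in>{1..n}. deg n u)"
    by (intro sum_mono2) (auto simp: deg_nonneg)
  finally show ?thesis using sum_deg[of n] by linarith
qed

lemma sum_adj_le_deg: "(\<Sum>v\<in>V. adj n u v) \<le> deg n u" if "finite V"
proof -
  have "(\<Sum>v\<in>V. adj n u v) = (\<Sum>v\<in>V \<inter> {1..n}. adj n u v)"
    using that by (intro sum.mono_neutral_right) (auto simp: adj_eq_0_outside)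
  also have "\<dots> \<le> deg n u" unfolding deg_def by (intro sum_mono2) (auto simp: adj_nonneg)
  finally show ?thesis .
qed

lemma codegree_tendsto:
  "1 \<le> s \<Longrightarrow> 1 \<le> t \<Longrightarrow> (\<lambda>n. (\<Sum>v\<in>{1..n}. adj n s v * adj n t v) / edge_count n) \<longlonglongrightarrow> \<sigma> s t"
  using codeg[unfolded codegree_condition_def, rule_format, of s t]
  by (simp add: adj_def[symmetric] edge_count_def[symmetric] adj_sym[of _ _ t])

lemma deg_over_edge_count_tendsto: "1 \<le> s \<Longrightarrow> (\<lambda>n. deg n s / edge_count n) \<longlonglongrightarrow> \<sigma> s s"
  using codegree_tendsto[of s s] by (simp add: adj_mult_self deg_def)

lemma sigma_diag_nonneg: "1 \<le> s \<Longrightarrow> 0 \<le> \<sigma> s s"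
  by (rule LIMSEQ_le_const[OF deg_over_edge_count_tendsto]) (auto simp: deg_nonneg edge_count_nonneg)

text \<open>The handshake lemma bounds the trace of \<open>\<sigma>\<close>; this is what makes the quadratic forms converge.\<close>

lemma sum_sigma_diag_le: "finite U \<Longrightarrow> U \<subseteq> {1..} \<Longrightarrow> (\<Sum>s\<in>U. \<sigma> s s) \<le> 2"
proof -
  assume U: "finite U" "U \<subseteq> {1..}"
  have "(\<lambda>n. \<Sum>s\<in>U. deg n s / edge_count n) \<longlonglongrightarrow> (\<Sum>s\<in>U. \<sigma> s s)"
    using U by (intro tendsto_sum deg_over_edge_count_tendsto) auto
  moreover have "(\<Sum>s\<in>U. deg n s / edge_count n) \<le> 2" for n
    using sum_deg_le[OF U(1), of n] edge_count_nonneg[of n]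
    by (cases "edge_count n = 0") (auto simp: divide_le_eq simp flip: sum_divide_distrib)
  ultimately show ?thesis by (intro LIMSEQ_le_const2) auto
qed

definition nbr_sum :: "nat \<Rightarrow> nat set \<Rightarrow> nat \<Rightarrow> 'a \<Rightarrow> real" where
  "nbr_sum n U v \<omega> = (\<Sum>u\<in>U. Xt u \<omega> * adj n u v)"

definition cond_var :: "nat \<Rightarrow> nat \<Rightarrow> nat \<Rightarrow> 'a \<Rightarrow> real" where
  "cond_var n K l \<omega> = (\<Sum>v\<in>{l..n}. (nbr_sum n {1..K} v \<omega>)\<^sup>2) / edge_count n"

definition quad_form :: "nat \<Rightarrow> 'a \<Rightarrow> real" where
  "quad_form K \<omega> = (\<Sum>s\<in>{1..K}. \<Sum>t\<in>{1..K}. \<sigma> s t * Xt s \<omega> * Xt t \<omega>)"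

lemma measurable_nbr_sum [measurable]: "nbr_sum n U v \<in> borel_measurable P"
  unfolding nbr_sum_def by measurable

lemma measurable_cond_var [measurable]: "cond_var n K l \<in> borel_measurable P"
  unfolding cond_var_def by measurable

lemma measurable_quad_form [measurable]: "quad_form K \<in> borel_measurable P"
  unfolding quad_form_def by measurable

lemma cond_var_expand:
  "cond_var n K l \<omega> = (\<Sum>s\<in>{1..K}. \<Sum>t\<in>{1..K}.
      Xt s \<omega> * Xt t \<omega> * ((\<Sum>v\<in>{l..n}. adj n s v * adj n t v) / edge_count n))"
proof -
  have "(\<Sum>v\<in>{l..n}. (nbr_sum n {1..K} v \<omega>)\<^sup>2)
      = (\<Sum>v\<in>{l..n}. \<Sum>s\<in>{1..K}. \<Sum>t\<in>{1..K}. Xt s \<omega> * Xt t \<omega> * (adj n s v * adj n t v))"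
    by (simp add: nbr_sum_def power2_eq_square sum_product mult_ac)
  also have "\<dots> = (\<Sum>s\<in>{1..K}. \<Sum>t\<in>{1..K}. \<Sum>v\<in>{l..n}. Xt s \<omega> * Xt t \<omega> * (adj n s v * adj n t v))"
    by (simp add: sum.swap[of _ "{l..n}"] sum.swap[of _ "{l..n}" "{1..K}"])
  finally show ?thesis
    by (simp add: cond_var_def sum_divide_distrib sum_distrib_left mult.assoc)
qed

lemma codegree_head_bounds:
  "0 \<le> (\<Sum>v\<in>{1..n}. adj n s v * adj n t v) - (\<Sum>v\<in>{l..n}. adj n s v * adj n t v)"
  "(\<Sum>v\<in>{1..n}. adj n s v * adj n t v) - (\<Sum>v\<in>{l..n}. adj n s v * adj n t v) \<le> real (l - 1)"
proof -
  have "(\<Sum>v\<in>{l..n}. adj n s v * adj n t v) = (\<Sum>v\<in>{l..n} \<inter> {1..n}. adj n s v * adj n t v)"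
    by (rule sum.mono_neutral_right) (auto simp: adj_eq_0_outside)
  then have eq: "(\<Sum>v\<in>{1..n}. adj n s v * adj n t v) - (\<Sum>v\<in>{l..n}. adj n s v * adj n t v)
      = (\<Sum>v\<in>{1..n} - {l..n} \<inter> {1..n}. adj n s v * adj n t v)"
    by (subst sum_diff) auto
  show "0 \<le> (\<Sum>v\<in>{1..n}. adj n s v * adj n t v) - (\<Sum>v\<in>{l..n}. adj n s v * adj n t v)"
    unfolding eq by (simp add: sum_nonneg adj_nonneg)
  have "(\<Sum>v\<in>{1..n} - {l..n} \<inter> {1..n}. adj n s v * adj n t v) \<le> real (card ({1..n} - {l..n} \<inter> {1..n}))"
    using sum_mono[of "{1..n} - {l..n} \<inter> {1..n}" "\<lambda>v. adj n s v * adj n t v" "\<lambda>_. 1"]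
    by (simp add: adj_le_1 adj_nonneg mult_le_one)
  also have "\<dots> \<le> real (card {1..<l})"
    by (intro of_nat_mono card_mono) auto
  finally show "(\<Sum>v\<in>{1..n}. adj n s v * adj n t v) - (\<Sum>v\<in>{l..n}. adj n s v * adj n t v) \<le> real (l - 1)"
    unfolding eq by simp
qed

text \<open>The \<open>O(\<surd>|E|)\<close> vertices missing from \<open>V\<^sub>3\<close> carry only \<open>o(|E|)\<close> of each co-degree sum.\<close>

lemma codegree_tail_tendsto:
  assumes l: "\<And>n. real (l n) \<le> c * sqrt (edge_count n) + 1" and "0 \<le> c" and "1 \<le> s" "1 \<le> t"
  shows "(\<lambda>n. (\<Sum>v\<in>{l n..n}. adj n s v * adj n t v) / edge_count n) \<longlonglongrightarrow> \<sigma> s t"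
proof -
  define full where "full n = (\<Sum>v\<in>{1..n}. adj n s v * adj n t v)" for n
  define part where "part n = (\<Sum>v\<in>{l n..n}. adj n s v * adj n t v)" for n
  have deficit: "0 \<le> full n - part n" "full n - part n \<le> c * sqrt (edge_count n)" for n
  proof -
    show "0 \<le> full n - part n" unfolding full_def part_def by (rule codegree_head_bounds)
    have "real (l n - 1) \<le> c * sqrt (edge_count n)"
      using l[of n] \<open>0 \<le> c\<close> edge_count_nonneg[of n] by (cases "l n") auto
    then show "full n - part n \<le> c * sqrt (edge_count n)"
      unfolding full_def part_def using codegree_head_bounds(2) order_trans by blast
  qed
  have c_lim: "(\<lambda>n. c / sqrt (edge_count n)) \<longlonglongrightarrow> 0"
    by (intro tendsto_divide_0[OF tendsto_const] filterlim_at_top_imp_at_infinity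
        filterlim_compose[OF sqrt_at_top edge_count_at_top])
  have "(\<lambda>n. (full n - part n) / edge_count n) \<longlonglongrightarrow> 0"
  proof (rule tendsto_sandwich[OF _ _ tendsto_const c_lim])
    show "\<forall>\<^sub>F n in sequentially. 0 \<le> (full n - part n) / edge_count n"
      using deficit(1) edge_count_nonneg by (auto intro!: always_eventually divide_nonneg_nonneg)
    show "\<forall>\<^sub>F n in sequentially. (full n - part n) / edge_count n \<le> c / sqrt (edge_count n)"
      using eventually_edge_count_pos
    proof eventually_elim
      case (elim n)
      have "(full n - part n) / edge_count n \<le> c * sqrt (edge_count n) / edge_count n"
        using deficit(2)[of n] elim by (simp add: divide_right_mono)
      also have "\<dots> = c / sqrt (edge_count n)"
        using elim by (simp add: field_simps)
      finally show ?case .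
    qed
  qed
  moreover have "(\<lambda>n. full n / edge_count n) \<longlonglongrightarrow> \<sigma> s t"
    unfolding full_def by (rule codegree_tendsto[OF \<open>1 \<le> s\<close> \<open>1 \<le> t\<close>])
  ultimately have "(\<lambda>n. full n / edge_count n - (full n - part n) / edge_count n) \<longlonglongrightarrow> \<sigma> s t - 0"
    by (intro tendsto_diff)
  then show ?thesis unfolding part_def[symmetric] by (simp add: diff_divide_distrib)
qed

lemma cond_var_tendsto_quad_form:
  assumes "\<And>n. real (l n) \<le> c * sqrt (edge_count n) + 1" and "0 \<le> c"
  shows "(\<lambda>n. cond_var n K (l n) \<omega>) \<longlonglongrightarrow> quad_form K \<omega>"
proof -
  have "quad_form K \<omega> = (\<Sum>s\<in>{1..K}. \<Sum>t\<in>{1..K}. Xt s \<omega> * Xt t \<omega> * \<sigma> s t)"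
    by (simp add: quad_form_def mult_ac)
  then show ?thesis
    unfolding cond_var_expand
    by (simp only:) (intro tendsto_sum tendsto_mult tendsto_const codegree_tail_tendsto[OF assms], auto)
qed

lemma abs_nbr_sum_le: "\<bar>nbr_sum n U v \<omega>\<bar> \<le> Xt_bound * (\<Sum>u\<in>U. adj n u v)"
proof -
  have "\<bar>nbr_sum n U v \<omega>\<bar> \<le> (\<Sum>u\<in>U. \<bar>Xt u \<omega>\<bar> * adj n u v)"
    unfolding nbr_sum_def by (rule order_trans[OF sum_abs]) (simp add: abs_mult adj_nonneg)
  also have "\<dots> \<le> (\<Sum>u\<in>U. Xt_bound * adj n u v)"
    by (intro sum_mono mult_right_mono abs_Xt_le adj_nonneg)
  finally show ?thesis by (simp add: sum_distrib_left)
qed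

lemma abs_nbr_sum_le_card: "\<bar>nbr_sum n U v \<omega>\<bar> \<le> Xt_bound * card U"
proof -
  have "(\<Sum>u\<in>U. adj n u v) \<le> card U"
    using sum_mono[of U "\<lambda>u. adj n u v" "\<lambda>_. 1"] by (simp add: adj_le_1)
  then show ?thesis
    using abs_nbr_sum_le[of n U v \<omega>] Xt_bound_pos by (meson order_trans less_imp_le mult_left_mono)
qed

lemma cond_var_nonneg: "0 \<le> cond_var n K l \<omega>"
  unfolding cond_var_def by (simp add: edge_count_nonneg sum_nonneg)

lemma cond_var_le: "cond_var n K l \<omega> \<le> 2 * K * Xt_bound\<^sup>2"
proof (cases "edge_count n = 0")
  case True
  then show ?thesis by (simp add: cond_var_def)
next
  case False
  then have E: "0 < edge_count n" using edge_count_nonneg[of n] by simp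
  have "(\<Sum>v\<in>{l..n}. (nbr_sum n {1..K} v \<omega>)\<^sup>2)
      \<le> (\<Sum>v\<in>{l..n}. (Xt_bound * K) * (Xt_bound * (\<Sum>u\<in>{1..K}. adj n u v)))"
  proof (intro sum_mono)
    fix v
    have "\<bar>nbr_sum n {1..K} v \<omega>\<bar> \<le> Xt_bound * K"
      using abs_nbr_sum_le_card[of n "{1..K}" v \<omega>] by simp
    then have "\<bar>nbr_sum n {1..K} v \<omega>\<bar> * \<bar>nbr_sum n {1..K} v \<omega>\<bar>
        \<le> (Xt_bound * K) * (Xt_bound * (\<Sum>u\<in>{1..K}. adj n u v))"
      by (rule mult_mono[OF _ abs_nbr_sum_le]) (auto simp: Xt_bound_pos less_imp_le)
    then show "(nbr_sum n {1..K} v \<omega>)\<^sup>2 \<le> (Xt_bound * K) * (Xt_bound * (\<Sum>u\<in>{1..K}. adj n u v))"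
      by (simp add: power2_eq_square)
  qed
  also have "\<dots> = Xt_bound\<^sup>2 * K * (\<Sum>u\<in>{1..K}. \<Sum>v\<in>{l..n}. adj n u v)"
    by (simp add: sum_distrib_left[symmetric] sum.swap[of _ "{l..n}"] power2_eq_square mult_ac)
  also have "\<dots> \<le> Xt_bound\<^sup>2 * K * (\<Sum>u\<in>{1..K}. deg n u)"
    by (intro mult_left_mono sum_mono sum_adj_le_deg) auto
  also have "\<dots> \<le> Xt_bound\<^sup>2 * K * (2 * edge_count n)"
    by (intro mult_left_mono sum_deg_le) auto
  finally show ?thesis using E by (simp add: cond_var_def divide_le_eq mult_ac)
qed

lemma integrable_cond_var: "integrable P (cond_var n K l)"
  by (rule integrable_bounded[where C="2 * K * Xt_bound\<^sup>2"]) (use cond_var_nonneg cond_var_le in auto)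

lemma quad_form_nonneg: "0 \<le> quad_form K \<omega>"
  by (rule LIMSEQ_le_const[OF cond_var_tendsto_quad_form[where l="\<lambda>_. 1" and c=0]])
     (auto intro: cond_var_nonneg)

lemma quad_form_le: "quad_form K \<omega> \<le> 2 * K * Xt_bound\<^sup>2"
  by (rule LIMSEQ_le_const2[OF cond_var_tendsto_quad_form[where l="\<lambda>_. 1" and c=0]])
     (auto intro: cond_var_le)

lemma integrable_quad_form: "integrable P (quad_form K)"
  by (rule integrable_bounded[where C="2 * K * Xt_bound\<^sup>2"]) (use quad_form_nonneg quad_form_le in auto)

lemma integrable_nbr_sum_square: "integrable P (\<lambda>\<omega>. (nbr_sum n U v \<omega>)\<^sup>2)"
  by (rule integrable_bounded[where C="(Xt_bound * card U)\<^sup>2"])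
     (auto simp: abs_le_square_iff[symmetric] intro: order_trans[OF _ abs_ge_self] abs_nbr_sum_le_card)

lemma expectation_nbr_sum_square:
  "finite U \<Longrightarrow> U \<subseteq> {1..} \<Longrightarrow> expectation (\<lambda>\<omega>. (nbr_sum n U v \<omega>)\<^sup>2) = (\<Sum>u\<in>U. adj n u v)"
  using expectation_lin_comb_Xt_square[of U "\<lambda>u. adj n u v"]
  by (simp add: nbr_sum_def mult.commute power2_eq_square adj_mult_self)

lemma abs_cond_var_diff_le:
  assumes "J \<le> K" "0 < e"
  shows "\<bar>cond_var n K 1 \<omega> - cond_var n J 1 \<omega>\<bar>
           \<le> (e * (\<Sum>v\<in>{1..n}. (nbr_sum n {1..J} v \<omega>)\<^sup>2)
               + (1 + 1 / e) * (\<Sum>v\<in>{1..n}. (nbr_sum n {J<..K} v \<omega>)\<^sup>2)) / edge_count n"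
proof -
  have split: "nbr_sum n {1..K} v \<omega> = nbr_sum n {1..J} v \<omega> + nbr_sum n {J<..K} v \<omega>" for v
  proof -
    have "{1..K} = {1..J} \<union> {J<..K}" using \<open>J \<le> K\<close> by auto
    then show ?thesis unfolding nbr_sum_def by (simp only:) (rule sum.union_disjoint, auto)
  qed
  have "\<bar>cond_var n K 1 \<omega> - cond_var n J 1 \<omega>\<bar>
      = \<bar>\<Sum>v\<in>{1..n}. (nbr_sum n {1..J} v \<omega> + nbr_sum n {J<..K} v \<omega>)\<^sup>2 - (nbr_sum n {1..J} v \<omega>)\<^sup>2\<bar> / edge_count n"
    unfolding cond_var_def split by (simp add: diff_divide_distrib[symmetric] sum_subtractf edge_count_nonneg)
  also have "\<dots> \<le> (\<Sum>v\<in>{1..n}. e * (nbr_sum n {1..J} v \<omega>)\<^sup>2 + (1 + 1 / e) * (nbr_sum n {J<..K} v \<omega>)\<^sup>2) / edge_count n"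
    by (intro divide_right_mono order_trans[OF sum_abs] sum_mono abs_power2_add_diff_le \<open>0 < e\<close>)
       (simp add: edge_count_nonneg)
  finally show ?thesis by (simp add: sum.distrib sum_distrib_left)
qed

lemma expectation_abs_cond_var_diff_le:
  assumes "J \<le> K" "0 < e"
  shows "expectation (\<lambda>\<omega>. \<bar>cond_var n K 1 \<omega> - cond_var n J 1 \<omega>\<bar>)
           \<le> 2 * e + (1 + 1 / e) * (\<Sum>u\<in>{J<..K}. deg n u / edge_count n)"
proof (cases "edge_count n = 0")
  case True
  then show ?thesis using assms by (simp add: cond_var_def sum_nonneg deg_nonneg)
next
  case False
  then have E: "0 < edge_count n" using edge_count_nonneg[of n] by simp
  define F where "F \<omega> = (e * (\<Sum>v\<in>{1..n}. (nbr_sum n {1..J} v \<omega>)\<^sup>2)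
      + (1 + 1 / e) * (\<Sum>v\<in>{1..n}. (nbr_sum n {J<..K} v \<omega>)\<^sup>2)) / edge_count n" for \<omega>
  have int_F: "integrable P F"
    unfolding F_def by (intro integrable_divide Bochner_Integration.integrable_add integrable_mult_right
        Bochner_Integration.integrable_sum integrable_nbr_sum_square)
  have "expectation (\<lambda>\<omega>. \<bar>cond_var n K 1 \<omega> - cond_var n J 1 \<omega>\<bar>) \<le> expectation F"
    unfolding F_def using abs_cond_var_diff_le[OF assms]
    by (intro integral_mono int_F[unfolded F_def] integrable_abs Bochner_Integration.integrable_diff integrable_cond_var)
  also have "expectation F = (e * (\<Sum>v\<in>{1..n}. \<Sum>u\<in>{1..J}. adj n u v)
      + (1 + 1 / e) * (\<Sum>v\<in>{1..n}. \<Sum>u\<in>{J<..K}. adj n u v)) / edge_count n"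
  proof -
    have "expectation (\<lambda>\<omega>. (nbr_sum n {1..J} v \<omega>)\<^sup>2) = (\<Sum>u\<in>{1..J}. adj n u v)"
      and "expectation (\<lambda>\<omega>. (nbr_sum n {J<..K} v \<omega>)\<^sup>2) = (\<Sum>u\<in>{J<..K}. adj n u v)" for v
      by (auto intro: expectation_nbr_sum_square)
    then show ?thesis
      unfolding F_def by (simp add: Bochner_Integration.integral_sum integrable_nbr_sum_square)
  qed
  also have "\<dots> = (e * (\<Sum>u\<in>{1..J}. deg n u) + (1 + 1 / e) * (\<Sum>u\<in>{J<..K}. deg n u)) / edge_count n"
    unfolding deg_def by (simp only: sum.swap[of _ "{1..n}" "{1..J}"] sum.swap[of _ "{1..n}" "{J<..K}"])
  also have "\<dots> \<le> (e * (2 * edge_count n) + (1 + 1 / e) * (\<Sum>u\<in>{J<..K}. deg n u)) / edge_count n"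
    using assms E by (intro divide_right_mono add_mono mult_left_mono sum_deg_le) auto
  also have "\<dots> = 2 * e + (1 + 1 / e) * (\<Sum>u\<in>{J<..K}. deg n u / edge_count n)"
    using E by (simp add: sum_divide_distrib[symmetric] add_divide_distrib)
  finally show ?thesis .
qed

lemma expectation_abs_quad_form_diff_le:
  assumes "J \<le> K" "0 < e"
  shows "expectation (\<lambda>\<omega>. \<bar>quad_form K \<omega> - quad_form J \<omega>\<bar>) \<le> 2 * e + (1 + 1 / e) * (\<Sum>u\<in>{J<..K}. \<sigma> u u)"
proof (rule LIMSEQ_le)
  show "(\<lambda>n. expectation (\<lambda>\<omega>. \<bar>cond_var n K 1 \<omega> - cond_var n J 1 \<omega>\<bar>))
      \<longlonglongrightarrow> expectation (\<lambda>\<omega>. \<bar>quad_form K \<omega> - quad_form J \<omega>\<bar>)"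
  proof (rule integral_dominated_convergence[where w="\<lambda>_. 2 * K * Xt_bound\<^sup>2 + 2 * J * Xt_bound\<^sup>2"])
    show "AE \<omega> in P. (\<lambda>n. \<bar>cond_var n K 1 \<omega> - cond_var n J 1 \<omega>\<bar>) \<longlonglongrightarrow> \<bar>quad_form K \<omega> - quad_form J \<omega>\<bar>"
      by (intro always_eventually allI tendsto_intros cond_var_tendsto_quad_form[where c=0]) auto
    show "AE \<omega> in P. norm \<bar>cond_var n K 1 \<omega> - cond_var n J 1 \<omega>\<bar> \<le> 2 * K * Xt_bound\<^sup>2 + 2 * J * Xt_bound\<^sup>2" for n
    proof (intro always_eventually allI)
      fix \<omega>
      show "norm \<bar>cond_var n K 1 \<omega> - cond_var n J 1 \<omega>\<bar> \<le> 2 * K * Xt_bound\<^sup>2 + 2 * J * Xt_bound\<^sup>2"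
        using cond_var_nonneg[of n K 1 \<omega>] cond_var_le[of n K 1 \<omega>]
          cond_var_nonneg[of n J 1 \<omega>] cond_var_le[of n J 1 \<omega>] by auto
    qed
  qed auto
  show "(\<lambda>n. 2 * e + (1 + 1 / e) * (\<Sum>u\<in>{J<..K}. deg n u / edge_count n))
      \<longlonglongrightarrow> 2 * e + (1 + 1 / e) * (\<Sum>u\<in>{J<..K}. \<sigma> u u)"
    by (intro tendsto_intros deg_over_edge_count_tendsto) auto
qed (use expectation_abs_cond_var_diff_le[OF assms] in auto)

lemma sigma_diag_tail_less:
  assumes "0 < e"
  shows "\<exists>N. \<forall>J K. N \<le> J \<longrightarrow> (\<Sum>u\<in>{J<..K}. \<sigma> u u) < e"
proof -
  define f where "f u = (if 1 \<le> u then \<sigma> u u else 0)" for u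
  have "summable f"
  proof (rule summableI_nonneg_bounded)
    show "0 \<le> f u" for u by (simp add: f_def sigma_diag_nonneg)
    show "sum f {..<n} \<le> 2" for n
    proof -
      have "sum f {..<n} = (\<Sum>u\<in>{1..<n}. \<sigma> u u)"
        by (rule sum.mono_neutral_cong_right) (auto simp: f_def)
      also have "\<dots> \<le> 2" by (rule sum_sigma_diag_le) auto
      finally show ?thesis .
    qed
  qed
  then obtain N where N: "\<And>m n. N \<le> m \<Longrightarrow> norm (sum f {m..<n}) < e"
    using \<open>0 < e\<close> unfolding summable_Cauchy by blast
  have "(\<Sum>u\<in>{J<..K}. \<sigma> u u) < e" if "N \<le> J" for J K
  proof -
    have "(\<Sum>u\<in>{J<..K}. \<sigma> u u) = sum f {Suc J..<Suc K}"
      by (rule sum.cong) (auto simp: f_def)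
    then show ?thesis using N[of "Suc J" "Suc K"] that by simp
  qed
  then show ?thesis by blast
qed

lemma quad_form_L1_Cauchy:
  assumes "0 < e"
  shows "\<exists>N. \<forall>i\<ge>N. \<forall>j\<ge>N. expectation (\<lambda>\<omega>. \<bar>quad_form i \<omega> - quad_form j \<omega>\<bar>) < e"
proof -
  define q where "q = 1 + 4 / e"
  define e' where "e' = e / (4 * q)"
  have "0 < q" using assms by (simp add: q_def add_pos_pos)
  then have "0 < e'" using assms by (simp add: e'_def)
  then obtain N where N: "\<And>J K. N \<le> J \<Longrightarrow> (\<Sum>u\<in>{J<..K}. \<sigma> u u) < e'"
    using sigma_diag_tail_less by blast
  have close: "expectation (\<lambda>\<omega>. \<bar>quad_form i \<omega> - quad_form j \<omega>\<bar>) < e" if "j \<le> i" "N \<le> j" for i j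
  proof -
    have "expectation (\<lambda>\<omega>. \<bar>quad_form i \<omega> - quad_form j \<omega>\<bar>) \<le> 2 * (e / 4) + q * (\<Sum>u\<in>{j<..i}. \<sigma> u u)"
      using expectation_abs_quad_form_diff_le[OF \<open>j \<le> i\<close>, of "e / 4"] assms by (simp add: q_def)
    also have "\<dots> \<le> 2 * (e / 4) + q * e'"
      using N[OF \<open>N \<le> j\<close>, of i] \<open>0 < q\<close> by (intro add_left_mono mult_left_mono) auto
    also have "q * e' = e / 4"
      using \<open>0 < q\<close> by (simp add: e'_def)
    also have "2 * (e / 4) + e / 4 < e" using assms by simp
    finally show ?thesis .
  qed
  show ?thesis
  proof (intro exI[of _ N] allI impI)
    fix i j assume "N \<le> i" "N \<le> j"
    then show "expectation (\<lambda>\<omega>. \<bar>quad_form i \<omega> - quad_form j \<omega>\<bar>) < e"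
      using close[of i j] close[of j i] by (cases "j \<le> i") (auto simp: abs_minus_commute)
  qed
qed

lemma ex_L1_quad_limit: "\<exists>T. L1_quad_limit P X \<sigma> M T"
proof -
  have "\<exists>T. integrable P T \<and> (\<lambda>K. expectation (\<lambda>\<omega>. \<bar>quad_form K \<omega> - T \<omega>\<bar>)) \<longlonglongrightarrow> 0"
    by (intro L1_Cauchy_imp_L1_limit integrable_quad_form quad_form_L1_Cauchy)
  then show ?thesis by (simp add: L1_quad_limit_def quad_form_def)
qed

section \<open>Exponential moments\<close>

definition moment_rate :: real where
  "moment_rate = 1 / (8 * Xt_bound\<^sup>2)"

lemma moment_rate_pos: "0 < moment_rate"
  using Xt_bound_pos by (simp add: moment_rate_def)

definition nbrs :: "nat \<Rightarrow> nat \<Rightarrow> nat \<Rightarrow> nat set" where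
  "nbrs n K v = {u\<in>{1..K}. adj n u v = 1}"

lemma finite_nbrs [simp]: "finite (nbrs n K v)"
  by (simp add: nbrs_def)

lemma nbr_sum_eq_sum_nbrs: "nbr_sum n {1..K} v \<omega> = (\<Sum>u\<in>nbrs n K v. Xt u \<omega>)"
proof -
  have "nbr_sum n {1..K} v \<omega> = (\<Sum>u\<in>{1..K}. if adj n u v = 1 then Xt u \<omega> else 0)"
    unfolding nbr_sum_def by (intro sum.cong refl) (use adj_cases in auto)
  also have "\<dots> = (\<Sum>u\<in>nbrs n K v. Xt u \<omega>)"
    unfolding nbrs_def by (rule sum.inter_filter[symmetric]) simp
  finally show ?thesis .
qed

lemma card_nbrs: "real (card (nbrs n K v)) = (\<Sum>u\<in>{1..K}. adj n u v)"
proof -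
  have "(\<Sum>u\<in>{1..K}. adj n u v) = (\<Sum>u\<in>{1..K}. if adj n u v = 1 then 1 else 0)"
    by (intro sum.cong refl) (use adj_cases in auto)
  also have "\<dots> = (\<Sum>u\<in>nbrs n K v. 1)"
    unfolding nbrs_def by (rule sum.inter_filter[symmetric]) simp
  finally show ?thesis by simp
qed

lemma nn_integral_exp_nbr_sum_square_le:
  assumes "nbrs n K v \<noteq> {}"
  shows "(\<integral>\<^sup>+\<omega>. ennreal (exp ((nbr_sum n {1..K} v \<omega>)\<^sup>2 / (4 * Xt_bound\<^sup>2 * card (nbrs n K v)))) \<partial>P)
           \<le> ennreal (sqrt 2)"
  unfolding nbr_sum_eq_sum_nbrs
proof (rule nn_integral_exp_square_sum_indep_le[OF _ _ assms Xt_bound_pos])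
  have "nbrs n K v \<subseteq> {1..}" by (auto simp: nbrs_def)
  then show "indep_vars (\<lambda>_. borel) Xt (nbrs n K v)"
    by (rule indep_vars_subset[OF indep_vars_Xt])
  show "expectation (Xt u) = 0" if "u \<in> nbrs n K v" for u
    using that by (intro expectation_Xt) (simp add: nbrs_def)
qed (auto simp: nbrs_def abs_Xt_le)

text \<open>
  \<open>moment_rate \<cdot> cond_var\<close> is a combination, with weights \<open>|nbrs v| / (2|E|)\<close> of total mass at most 1
  (handshake lemma), of the normalised squares \<open>nbr_sum\<^sup>2 / (4 Xt_bound\<^sup>2 |nbrs v|)\<close>,
  whose exponential moments are controlled by Hoeffding's lemma.
\<close>

lemma nn_integral_exp_cond_var_le:
  "(\<integral>\<^sup>+\<omega>. ennreal (exp (moment_rate * cond_var n K l \<omega>)) \<partial>P) \<le> ennreal (sqrt 2)"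
proof (cases "edge_count n = 0")
  case True
  then show ?thesis by (simp add: cond_var_def emeasure_space_1)
next
  case False
  then have E: "0 < edge_count n" using edge_count_nonneg[of n] by simp
  define V where "V = {v\<in>{l..n}. nbrs n K v \<noteq> {}}"
  define p where "p v = card (nbrs n K v) / (2 * edge_count n)" for v
  define y where "y v \<omega> = (nbr_sum n {1..K} v \<omega>)\<^sup>2 / (4 * Xt_bound\<^sup>2 * card (nbrs n K v))" for v \<omega>
  have p_sum: "sum p V \<le> 1"
  proof -
    have "(\<Sum>v\<in>V. real (card (nbrs n K v))) \<le> (\<Sum>v\<in>{l..n}. real (card (nbrs n K v)))"
      by (rule sum_mono2) (auto simp: V_def)
    also have "\<dots> = (\<Sum>u\<in>{1..K}. \<Sum>v\<in>{l..n}. adj n u v)"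
      by (simp add: card_nbrs sum.swap[of _ "{l..n}"])
    also have "\<dots> \<le> (\<Sum>u\<in>{1..K}. deg n u)" by (intro sum_mono sum_adj_le_deg) simp
    also have "\<dots> \<le> 2 * edge_count n" by (rule sum_deg_le) simp
    finally show ?thesis using E by (simp add: p_def divide_le_eq flip: sum_divide_distrib)
  qed
  have combination: "moment_rate * cond_var n K l \<omega> = (\<Sum>v\<in>V. p v * y v \<omega>)" for \<omega>
  proof -
    have "(\<Sum>v\<in>{l..n}. (nbr_sum n {1..K} v \<omega>)\<^sup>2) = (\<Sum>v\<in>V. (nbr_sum n {1..K} v \<omega>)\<^sup>2)"
      unfolding nbr_sum_eq_sum_nbrs by (rule sum.mono_neutral_right) (auto simp: V_def)
    moreover have "p v * y v \<omega> = moment_rate * (nbr_sum n {1..K} v \<omega>)\<^sup>2 / edge_count n" if "v \<in> V" for v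
      using that E Xt_bound_pos by (simp add: V_def p_def y_def moment_rate_def card_gt_0_iff field_simps power2_eq_square)
    ultimately show ?thesis
      by (simp add: cond_var_def sum_divide_distrib sum_distrib_left)
  qed
  have "(\<integral>\<^sup>+\<omega>. ennreal (exp (\<Sum>v\<in>V. p v * y v \<omega>)) \<partial>P) \<le> ennreal (sqrt 2)"
  proof (rule nn_integral_exp_subconvex_le[OF _ _ p_sum])
    show "(\<integral>\<^sup>+\<omega>. ennreal (exp (y v \<omega>)) \<partial>P) \<le> ennreal (sqrt 2)" if "v \<in> V" for v
      using that nn_integral_exp_nbr_sum_square_le by (simp add: V_def y_def)
  qed (auto simp: V_def p_def y_def E less_imp_le)
  then show ?thesis by (simp only: combination)
qed

lemma nn_integral_exp_quad_form_le:
  "(\<integral>\<^sup>+\<omega>. ennreal (exp (moment_rate * quad_form K \<omega>)) \<partial>P) \<le> ennreal (sqrt 2)"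
  by (rule nn_integral_le_of_AE_tendsto[where f="\<lambda>n \<omega>. exp (moment_rate * cond_var n K 1 \<omega>)"])
     (auto intro!: always_eventually tendsto_intros cond_var_tendsto_quad_form[where c=0]
       nn_integral_exp_cond_var_le)

lemma exp_moment_quad_form:
  "integrable P (\<lambda>\<omega>. exp (moment_rate * \<bar>quad_form K \<omega>\<bar>))" "expectation (\<lambda>\<omega>. exp (moment_rate * \<bar>quad_form K \<omega>\<bar>)) \<le> sqrt 2"
  using integrable_exp_abs_of_nn_integral_le[OF measurable_quad_form _ nn_integral_exp_quad_form_le]
  by (simp_all add: quad_form_nonneg)

section \<open>The conditional Gaussian law\<close>

definition x_part :: "nat set \<Rightarrow> 'a \<Rightarrow> nat + nat \<Rightarrow> real" where
  "x_part I \<omega> = restrict (\<lambda>i. case_sum X Z i \<omega>) (Inl ` I)"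

definition z_part :: "nat set \<Rightarrow> 'a \<Rightarrow> nat + nat \<Rightarrow> real" where
  "z_part J \<omega> = restrict (\<lambda>i. case_sum X Z i \<omega>) (Inr ` J)"

definition lin_coeff :: "nat \<Rightarrow> nat \<Rightarrow> nat \<Rightarrow> (nat + nat \<Rightarrow> real) \<Rightarrow> real" where
  "lin_coeff n K v \<xi> = (\<Sum>u\<in>{1..K}. std_trunc (\<xi> (Inl u)) * adj n u v) / sqrt (edge_count n)"

definition U13_of :: "nat \<Rightarrow> nat \<Rightarrow> nat \<Rightarrow> (nat + nat \<Rightarrow> real) \<times> (nat + nat \<Rightarrow> real) \<Rightarrow> real" where
  "U13_of n K l \<xi>\<zeta> = (\<Sum>v\<in>{l..n}. lin_coeff n K v (fst \<xi>\<zeta>) * snd \<xi>\<zeta> (Inr v))"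

definition V3_start :: "nat \<Rightarrow> real \<Rightarrow> nat" where
  "V3_start n K2 = nat \<lfloor>K2 * sqrt (edge_count n)\<rfloor> + 1"

abbreviation (input) PiB :: "(nat + nat) set \<Rightarrow> (nat + nat \<Rightarrow> real) measure" where
  "PiB I \<equiv> PiM I (\<lambda>_. borel)"

lemma measurable_case_sum_XZ [measurable]: "case_sum X Z i \<in> borel_measurable P"
  by (cases i) auto

lemma measurable_x_part [measurable]: "x_part I \<in> measurable P (PiB (Inl ` I))"
  unfolding x_part_def by measurable

lemma measurable_z_part [measurable]: "z_part J \<in> measurable P (PiB (Inr ` J))"
  unfolding z_part_def by measurable

lemma indep_var_x_part_z_part:
  "I \<subseteq> {1..} \<Longrightarrow> J \<subseteq> {1..} \<Longrightarrow> indep_var (PiB (Inl ` I)) (x_part I) (PiB (Inr ` J)) (z_part J)"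
  unfolding x_part_def z_part_def by (rule indep_var_restrict[OF indep]) auto

lemma measurable_lin_coeff: "lin_coeff n K v \<in> borel_measurable (PiB (Inl ` {1..K}))"
  unfolding lin_coeff_def
proof (intro borel_measurable_divide borel_measurable_sum borel_measurable_times measurable_const)
  fix u assume "u \<in> {1..K}"
  then have "(\<lambda>\<xi>. \<xi> (Inl u)) \<in> borel_measurable (PiB (Inl ` {1..K}))"
    by (intro measurable_component_singleton) auto
  then show "(\<lambda>\<xi>. std_trunc (\<xi> (Inl u))) \<in> borel_measurable (PiB (Inl ` {1..K}))" by measurable
qed auto

lemma measurable_U13_of: "U13_of n K l \<in> borel_measurable (PiB (Inl ` {1..K}) \<Otimes>\<^sub>M PiB (Inr ` {l..n}))"
  unfolding U13_of_def
proof (intro borel_measurable_sum borel_measurable_times)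
  fix v assume "v \<in> {l..n}"
  show "(\<lambda>\<xi>\<zeta>. lin_coeff n K v (fst \<xi>\<zeta>)) \<in> borel_measurable (PiB (Inl ` {1..K}) \<Otimes>\<^sub>M PiB (Inr ` {l..n}))"
    by (rule measurable_compose[OF measurable_fst measurable_lin_coeff])
  have "(\<lambda>\<zeta>. \<zeta> (Inr v)) \<in> borel_measurable (PiB (Inr ` {l..n}))"
    using \<open>v \<in> {l..n}\<close> by (intro measurable_component_singleton) auto
  then show "(\<lambda>\<xi>\<zeta>. snd \<xi>\<zeta> (Inr v)) \<in> borel_measurable (PiB (Inl ` {1..K}) \<Otimes>\<^sub>M PiB (Inr ` {l..n}))"
    by (rule measurable_compose[OF measurable_snd])
qed

lemma U13_eq_U13_of:
  "U13 P X Z G M n K1 K2 \<omega> = U13_of n (nat \<lfloor>K1\<rfloor>) (V3_start n K2) (x_part {1..nat \<lfloor>K1\<rfloor>} \<omega>, z_part {V3_start n K2..n} \<omega>)"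
proof -
  have "U13 P X Z G M n K1 K2 \<omega>
      = (\<Sum>v\<in>{V3_start n K2..n}. \<Sum>u\<in>{1..nat \<lfloor>K1\<rfloor>}. Xt u \<omega> * adj n u v * Z v \<omega>) / sqrt (edge_count n)"
    unfolding U13_def by (subst sum.swap) (simp add: adj_def edge_count_def V3_start_def)
  also have "\<dots> = U13_of n (nat \<lfloor>K1\<rfloor>) (V3_start n K2) (x_part {1..nat \<lfloor>K1\<rfloor>} \<omega>, z_part {V3_start n K2..n} \<omega>)"
    by (simp add: U13_of_def lin_coeff_def x_part_def z_part_def Xt_eq V3_start_def sum_distrib_right
        sum_divide_distrib[symmetric])
  finally show ?thesis .
qed

lemma measurable_U13 [measurable]: "(\<lambda>\<omega>. U13 P X Z G M n K1 K2 \<omega>) \<in> borel_measurable P"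
  unfolding U13_def by measurable

lemma sum_lin_coeff_square:
  "(\<Sum>v\<in>{l..n}. (lin_coeff n K v (x_part {1..K} \<omega>))\<^sup>2) = cond_var n K l \<omega>"
proof -
  have "(lin_coeff n K v (x_part {1..K} \<omega>))\<^sup>2 = (nbr_sum n {1..K} v \<omega>)\<^sup>2 / edge_count n" for v
    by (simp add: lin_coeff_def x_part_def nbr_sum_def Xt_eq power_divide edge_count_nonneg)
  then show ?thesis by (simp add: cond_var_def sum_divide_distrib)
qed

lemma distr_U13_of_z_part:
  assumes "1 \<le> l"
  shows "distr P borel (\<lambda>\<omega>. U13_of n K l (\<xi>, z_part {l..n} \<omega>))
           = distr std_normal_measure borel (\<lambda>w. sqrt (\<Sum>v\<in>{l..n}. (lin_coeff n K v \<xi>)\<^sup>2) * w)"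
proof -
  have "(\<lambda>\<omega>. U13_of n K l (\<xi>, z_part {l..n} \<omega>)) = (\<lambda>\<omega>. \<Sum>v\<in>{l..n}. lin_coeff n K v \<xi> * Z v \<omega>)"
    by (simp add: fun_eq_iff U13_of_def z_part_def)
  moreover have "indep_vars (\<lambda>_. borel) Z {l..n}"
    using assms by (intro indep_vars_subset[OF indep_vars_Z]) auto
  then have "distr P borel (\<lambda>\<omega>. \<Sum>v\<in>{l..n}. lin_coeff n K v \<xi> * Z v \<omega>)
      = distr std_normal_measure borel (\<lambda>w. sqrt (\<Sum>v\<in>{l..n}. (lin_coeff n K v \<xi>)\<^sup>2) * w)"
    by (rule distr_sum_indep_std_normal) (use assms in \<open>auto intro: normal_Z\<close>)
  ultimately show ?thesis by simp
qed

lemma nn_integral_U13_of_z_part: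
  assumes "1 \<le> l" and \<xi>: "\<xi> \<in> space (PiB (Inl ` {1..K}))" and [measurable]: "f \<in> borel_measurable borel"
  shows "(\<integral>\<^sup>+\<omega>. f (U13_of n K l (\<xi>, z_part {l..n} \<omega>)) \<partial>P)
           = gauss_nn_expect f (\<Sum>v\<in>{l..n}. (lin_coeff n K v \<xi>)\<^sup>2)"
proof -
  have [measurable]: "(\<lambda>\<omega>. U13_of n K l (\<xi>, z_part {l..n} \<omega>)) \<in> borel_measurable P"
    by (rule measurable_compose[OF measurable_Pair[OF measurable_const[OF \<xi>] measurable_z_part] measurable_U13_of])
  have "(\<integral>\<^sup>+\<omega>. f (U13_of n K l (\<xi>, z_part {l..n} \<omega>)) \<partial>P)
      = integral\<^sup>N (distr P borel (\<lambda>\<omega>. U13_of n K l (\<xi>, z_part {l..n} \<omega>))) f"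
    by (rule nn_integral_distr[symmetric]) simp_all
  also have "\<dots> = integral\<^sup>N (distr std_normal_measure borel (\<lambda>w. sqrt (\<Sum>v\<in>{l..n}. (lin_coeff n K v \<xi>)\<^sup>2) * w)) f"
    by (simp only: distr_U13_of_z_part[OF \<open>1 \<le> l\<close>])
  also have "\<dots> = gauss_nn_expect f (\<Sum>v\<in>{l..n}. (lin_coeff n K v \<xi>)\<^sup>2)"
    unfolding gauss_nn_expect_def by (rule nn_integral_distr) simp_all
  finally show ?thesis .
qed

lemma distr_U13:
  "distr P borel (\<lambda>\<omega>. U13 P X Z G M n K1 K2 \<omega>) = normal_mixture P (cond_var n (nat \<lfloor>K1\<rfloor>) (V3_start n K2))"
proof (rule measure_eqI)
  let ?K = "nat \<lfloor>K1\<rfloor>" and ?l = "V3_start n K2"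
  have "1 \<le> ?l" by (simp add: V3_start_def)
  have [measurable]: "U13_of n ?K ?l \<in> borel_measurable (PiB (Inl ` {1..?K}) \<Otimes>\<^sub>M PiB (Inr ` {?l..n}))"
    by (rule measurable_U13_of)
  have indep_parts: "indep_var (PiB (Inl ` {1..?K})) (x_part {1..?K}) (PiB (Inr ` {?l..n})) (z_part {?l..n})"
    using \<open>1 \<le> ?l\<close> by (intro indep_var_x_part_z_part) auto
  show "sets (distr P borel (\<lambda>\<omega>. U13 P X Z G M n K1 K2 \<omega>)) = sets (normal_mixture P (cond_var n ?K ?l))"
    by (simp add: normal_mixture_def)
  fix A :: "real set" assume A: "A \<in> sets (distr P borel (\<lambda>\<omega>. U13 P X Z G M n K1 K2 \<omega>))"
  then have [measurable]: "A \<in> sets borel" by simp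
  then have ind_A: "indicator A \<in> borel_measurable borel" by simp
  have "emeasure (distr P borel (\<lambda>\<omega>. U13 P X Z G M n K1 K2 \<omega>)) A
      = (\<integral>\<^sup>+y. indicator A y \<partial>distr P borel (\<lambda>\<omega>. U13 P X Z G M n K1 K2 \<omega>))"
    using A by (rule nn_integral_indicator[symmetric])
  also have "\<dots> = (\<integral>\<^sup>+\<omega>. indicator A (U13_of n ?K ?l (x_part {1..?K} \<omega>, z_part {?l..n} \<omega>)) \<partial>P)"
    by (subst nn_integral_distr) (simp_all add: U13_eq_U13_of)
  also have "\<dots> = (\<integral>\<^sup>+\<omega>'. (\<integral>\<^sup>+\<omega>. indicator A (U13_of n ?K ?l (x_part {1..?K} \<omega>', z_part {?l..n} \<omega>)) \<partial>P) \<partial>P)"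
    using indep_parts by (rule nn_integral_indep_var_decouple) measurable
  also have "\<dots> = (\<integral>\<^sup>+\<omega>'. gauss_nn_expect (indicator A) (cond_var n ?K ?l \<omega>') \<partial>P)"
  proof (intro nn_integral_cong)
    fix \<omega>'
    have x: "x_part {1..?K} \<omega>' \<in> space (PiB (Inl ` {1..?K}))" by (simp add: x_part_def space_PiM)
    show "(\<integral>\<^sup>+\<omega>. indicator A (U13_of n ?K ?l (x_part {1..?K} \<omega>', z_part {?l..n} \<omega>)) \<partial>P)
        = gauss_nn_expect (indicator A) (cond_var n ?K ?l \<omega>')"
      unfolding nn_integral_U13_of_z_part[OF \<open>1 \<le> ?l\<close> x ind_A] sum_lin_coeff_square ..
  qed
  also have "\<dots> = emeasure (normal_mixture P (cond_var n ?K ?l)) A"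
    by (simp add: nn_integral_normal_mixture[symmetric] nn_integral_indicator normal_mixture_def)
  finally show "emeasure (distr P borel (\<lambda>\<omega>. U13 P X Z G M n K1 K2 \<omega>)) A
      = emeasure (normal_mixture P (cond_var n ?K ?l)) A" .
qed

lemma integrable_U13_iff:
  fixes f :: "real \<Rightarrow> real"
  assumes [measurable]: "f \<in> borel_measurable borel"
  shows "integrable P (\<lambda>\<omega>. f (U13 P X Z G M n K1 K2 \<omega>))
           \<longleftrightarrow> integrable (normal_mixture P (cond_var n (nat \<lfloor>K1\<rfloor>) (V3_start n K2))) f"
  by (simp flip: distr_U13 add: integrable_distr_eq)

lemma expectation_U13:
  fixes f :: "real \<Rightarrow> real"
  assumes [measurable]: "f \<in> borel_measurable borel" and int: "integrable P (\<lambda>\<omega>. f (U13 P X Z G M n K1 K2 \<omega>))"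
  shows "expectation (\<lambda>\<omega>. f (U13 P X Z G M n K1 K2 \<omega>))
           = expectation (\<lambda>\<omega>. gauss_expect f (cond_var n (nat \<lfloor>K1\<rfloor>) (V3_start n K2) \<omega>))"
proof -
  have "expectation (\<lambda>\<omega>. f (U13 P X Z G M n K1 K2 \<omega>)) = integral\<^sup>L (distr P borel (\<lambda>\<omega>. U13 P X Z G M n K1 K2 \<omega>)) f"
    by (rule integral_distr[symmetric]) simp_all
  also have "\<dots> = expectation (\<lambda>\<omega>. gauss_expect f (cond_var n (nat \<lfloor>K1\<rfloor>) (V3_start n K2) \<omega>))"
    unfolding distr_U13 using int by (intro integral_normal_mixture) (simp_all add: integrable_U13_iff)
  finally show ?thesis .
qed

lemma integrable_U13_power: "integrable P (\<lambda>\<omega>. (U13 P X Z G M n K1 K2 \<omega>) ^ k)"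
proof -
  let ?V = "cond_var n (nat \<lfloor>K1\<rfloor>) (V3_start n K2)"
  have "integrable P (\<lambda>\<omega>. exp (1 * \<bar>?V \<omega>\<bar>))"
  proof (rule integrable_bounded[where C="exp (2 * real (nat \<lfloor>K1\<rfloor>) * Xt_bound\<^sup>2)"])
    show "\<bar>exp (1 * \<bar>?V \<omega>\<bar>)\<bar> \<le> exp (2 * real (nat \<lfloor>K1\<rfloor>) * Xt_bound\<^sup>2)" for \<omega>
      using cond_var_nonneg[of n "nat \<lfloor>K1\<rfloor>" "V3_start n K2" \<omega>] cond_var_le[of n "nat \<lfloor>K1\<rfloor>" "V3_start n K2" \<omega>] by simp
  qed simp
  from integrable_normal_mixture_power[OF measurable_cond_var zero_less_one this]
  show ?thesis using integrable_U13_iff[of "\<lambda>x. x ^ k"] by simp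
qed

lemma V3_start_le: "real (V3_start n K2) \<le> max K2 0 * sqrt (edge_count n) + 1"
proof -
  have "real (nat \<lfloor>K2 * sqrt (edge_count n)\<rfloor>) \<le> max K2 0 * sqrt (edge_count n)"
  proof (cases "0 \<le> K2 * sqrt (edge_count n)")
    case True
    then have "real (nat \<lfloor>K2 * sqrt (edge_count n)\<rfloor>) \<le> K2 * sqrt (edge_count n)" by (rule of_nat_floor)
    also have "\<dots> \<le> max K2 0 * sqrt (edge_count n)" by (intro mult_right_mono) (auto simp: edge_count_nonneg)
    finally show ?thesis .
  qed (simp add: edge_count_nonneg)
  then show ?thesis by (simp add: V3_start_def)
qed

lemma expectation_cond_var_tendsto:
  fixes H :: "real \<Rightarrow> real"
  assumes H: "continuous_on UNIV H" and growth: "\<And>x. \<bar>H x\<bar> \<le> A * exp (moment_rate * \<bar>x\<bar> / 2)"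
  shows "(\<lambda>n. expectation (\<lambda>\<omega>. H (cond_var n K (V3_start n K2) \<omega>))) \<longlonglongrightarrow> expectation (\<lambda>\<omega>. H (quad_form K \<omega>))"
proof (rule integral_dominated_convergence[where w="\<lambda>_. A * exp (moment_rate * (2 * K * Xt_bound\<^sup>2) / 2)"])
  have [measurable]: "H \<in> borel_measurable borel" by (rule borel_measurable_continuous_onI[OF H])
  show "(\<lambda>\<omega>. H (quad_form K \<omega>)) \<in> borel_measurable P" "(\<lambda>\<omega>. H (cond_var n K (V3_start n K2) \<omega>)) \<in> borel_measurable P" for n
    by simp_all
  show "AE \<omega> in P. (\<lambda>n. H (cond_var n K (V3_start n K2) \<omega>)) \<longlonglongrightarrow> H (quad_form K \<omega>)"
    by (intro always_eventually allI continuous_on_tendsto_compose[OF H] cond_var_tendsto_quad_form[OF V3_start_le]) auto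
  show "AE \<omega> in P. norm (H (cond_var n K (V3_start n K2) \<omega>)) \<le> A * exp (moment_rate * (2 * K * Xt_bound\<^sup>2) / 2)" for n
  proof (intro always_eventually allI)
    fix \<omega>
    have "A * exp (moment_rate * \<bar>cond_var n K (V3_start n K2) \<omega>\<bar> / 2) \<le> A * exp (moment_rate * (2 * K * Xt_bound\<^sup>2) / 2)"
      using cond_var_le[of n K "V3_start n K2" \<omega>] cond_var_nonneg[of n K "V3_start n K2" \<omega>] moment_rate_pos exp_growth_const_nonneg[OF growth]
      by (intro mult_left_mono) (auto simp: divide_right_mono)
    then show "norm (H (cond_var n K (V3_start n K2) \<omega>)) \<le> A * exp (moment_rate * (2 * K * Xt_bound\<^sup>2) / 2)"
      using growth[of "cond_var n K (V3_start n K2) \<omega>"] by simp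
  qed
qed simp

end

locale codegree_limit = codegree_model +
  fixes T :: "'a \<Rightarrow> real"
  assumes L1_quad_limit_T: "L1_quad_limit P X \<sigma> M T"
begin

lemma integrable_T: "integrable P T"
  using L1_quad_limit_T by (simp add: L1_quad_limit_def)

lemma measurable_T [measurable]: "T \<in> borel_measurable P"
  using integrable_T by blast

lemma quad_form_L1_tendsto: "(\<lambda>K. expectation (\<lambda>\<omega>. \<bar>quad_form K \<omega> - T \<omega>\<bar>)) \<longlonglongrightarrow> 0"
  using L1_quad_limit_T by (simp add: L1_quad_limit_def quad_form_def)

lemma ex_AE_subseq_tendsto_T:
  "\<exists>r. strict_mono r \<and> (AE \<omega> in P. (\<lambda>i. quad_form (r i) \<omega>) \<longlonglongrightarrow> T \<omega>)"
proof -
  obtain r where "strict_mono r" "AE \<omega> in P. (\<lambda>i. quad_form (r i) \<omega> - T \<omega>) \<longlonglongrightarrow> 0"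
    using tendsto_L1_AE_subseq[of P "\<lambda>K \<omega>. quad_form K \<omega> - T \<omega>"] quad_form_L1_tendsto
    by (auto intro: integrable_quad_form integrable_T)
  then show ?thesis by (auto simp: LIM_zero_iff elim!: eventually_mono)
qed

lemma T_nonneg: "AE \<omega> in P. 0 \<le> T \<omega>"
proof -
  obtain r where "AE \<omega> in P. (\<lambda>i. quad_form (r i) \<omega>) \<longlonglongrightarrow> T \<omega>"
    using ex_AE_subseq_tendsto_T by blast
  then show ?thesis
    by eventually_elim (rule LIMSEQ_le_const, assumption, simp add: quad_form_nonneg)
qed

lemma nn_integral_exp_T_le: "(\<integral>\<^sup>+\<omega>. ennreal (exp (moment_rate * T \<omega>)) \<partial>P) \<le> ennreal (sqrt 2)"
proof -
  obtain r where r: "AE \<omega> in P. (\<lambda>i. quad_form (r i) \<omega>) \<longlonglongrightarrow> T \<omega>"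
    using ex_AE_subseq_tendsto_T by blast
  show ?thesis
  proof (rule nn_integral_le_of_AE_tendsto[where f="\<lambda>i \<omega>. exp (moment_rate * quad_form (r i) \<omega>)"])
    show "AE \<omega> in P. (\<lambda>i. exp (moment_rate * quad_form (r i) \<omega>)) \<longlonglongrightarrow> exp (moment_rate * T \<omega>)"
      using r by eventually_elim (intro tendsto_intros)
  qed (simp_all add: nn_integral_exp_quad_form_le)
qed

lemma exp_moment_T:
  "integrable P (\<lambda>\<omega>. exp (moment_rate * \<bar>T \<omega>\<bar>))" "expectation (\<lambda>\<omega>. exp (moment_rate * \<bar>T \<omega>\<bar>)) \<le> sqrt 2"
  using integrable_exp_abs_of_nn_integral_le[OF measurable_T T_nonneg nn_integral_exp_T_le] by simp_all

lemma expectation_quad_form_tendsto: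
  fixes H :: "real \<Rightarrow> real"
  assumes "continuous_on UNIV H" and "\<And>x. \<bar>H x\<bar> \<le> A * exp (moment_rate * \<bar>x\<bar> / 2)"
  shows "(\<lambda>K. expectation (\<lambda>\<omega>. H (quad_form K \<omega>))) \<longlonglongrightarrow> expectation (\<lambda>\<omega>. H (T \<omega>))"
  by (rule expectation_tendsto_of_L1_exp_growth[OF integrable_quad_form integrable_T
        quad_form_L1_tendsto moment_rate_pos exp_moment_quad_form exp_moment_T assms])

lemma limsup_U13_tendsto:
  fixes f :: "real \<Rightarrow> real"
  assumes f [measurable]: "f \<in> borel_measurable borel"
    and int_U13: "\<And>n K1 K2. integrable P (\<lambda>\<omega>. f (U13 P X Z G M n K1 K2 \<omega>))"
    and int_mixture: "integrable (normal_mixture P T) f"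
    and cont: "continuous_on UNIV (gauss_expect f)"
    and growth: "\<And>x. \<bar>gauss_expect f x\<bar> \<le> A * exp (moment_rate * \<bar>x\<bar> / 2)"
  shows "((\<lambda>(K1, K2). limsup (\<lambda>n. ereal \<bar>expectation (\<lambda>\<omega>. f (U13 P X Z G M n K1 K2 \<omega>))
            - (\<integral>x. f x \<partial>normal_mixture P T)\<bar>)) \<longlongrightarrow> 0) (at_top \<times>\<^sub>F at_top)"
proof (rule limsup_abs_diff_tendsto_iterated)
  show "(\<lambda>n. expectation (\<lambda>\<omega>. f (U13 P X Z G M n K1 K2 \<omega>)))
      \<longlonglongrightarrow> expectation (\<lambda>\<omega>. gauss_expect f (quad_form (nat \<lfloor>K1\<rfloor>) \<omega>))" for K1 K2
    unfolding expectation_U13[OF f int_U13] by (rule expectation_cond_var_tendsto[OF cont growth])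
  show "(\<lambda>K. expectation (\<lambda>\<omega>. gauss_expect f (quad_form K \<omega>))) \<longlonglongrightarrow> (\<integral>x. f x \<partial>normal_mixture P T)"
    unfolding integral_normal_mixture[OF measurable_T f int_mixture]
    by (rule expectation_quad_form_tendsto[OF cont growth])
qed

lemma bounded_continuous_U13_tendsto:
  fixes f :: "real \<Rightarrow> real"
  assumes f: "continuous_on UNIV f" and bound: "\<And>x. \<bar>f x\<bar> \<le> C"
  shows "((\<lambda>(K1, K2). limsup (\<lambda>n. ereal \<bar>expectation (\<lambda>\<omega>. f (U13 P X Z G M n K1 K2 \<omega>))
            - (\<integral>x. f x \<partial>normal_mixture P T)\<bar>)) \<longlongrightarrow> 0) (at_top \<times>\<^sub>F at_top)"
proof (rule limsup_U13_tendsto)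
  show [measurable]: "f \<in> borel_measurable borel" by (rule borel_measurable_continuous_onI[OF f])
  show "integrable P (\<lambda>\<omega>. f (U13 P X Z G M n K1 K2 \<omega>))" for n K1 K2
    by (rule integrable_bounded[OF _ bound]) simp
  interpret mixture: prob_space "normal_mixture P T" by (rule prob_space_normal_mixture) simp
  show "integrable (normal_mixture P T) f"
    using bound by (intro mixture.integrable_const_bound[where B=C]) (simp_all add: normal_mixture_def)
  show "continuous_on UNIV (gauss_expect f)" by (rule continuous_on_gauss_expect[OF f bound])
  show "\<bar>gauss_expect f x\<bar> \<le> C * exp (moment_rate * \<bar>x\<bar> / 2)" for x
  proof -
    have "C \<le> C * exp (moment_rate * \<bar>x\<bar> / 2)"
      using order_trans[OF abs_ge_zero bound[of 0]] moment_rate_pos by (simp add: mult_le_cancel_left1)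
    then show ?thesis using abs_gauss_expect_le[OF \<open>f \<in> borel_measurable borel\<close> bound, of x] by linarith
  qed
qed

lemma moment_U13_tendsto:
  "((\<lambda>(K1, K2). limsup (\<lambda>n. ereal \<bar>expectation (\<lambda>\<omega>. (U13 P X Z G M n K1 K2 \<omega>) ^ k)
      - (\<integral>x. x ^ k \<partial>normal_mixture P T)\<bar>)) \<longlongrightarrow> 0) (at_top \<times>\<^sub>F at_top)"
proof (rule limsup_U13_tendsto)
  define m where "m = (\<integral>w. w ^ k \<partial>std_normal_measure)"
  show "integrable (normal_mixture P T) (\<lambda>x. x ^ k)"
    by (rule integrable_normal_mixture_power[OF measurable_T moment_rate_pos exp_moment_T(1)])
  show "continuous_on UNIV (gauss_expect (\<lambda>x. x ^ k))"
    unfolding gauss_expect_power by (intro continuous_intros)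
  show "\<bar>gauss_expect (\<lambda>x. x ^ k) x\<bar> \<le> (\<bar>m\<bar> * ((2 / moment_rate) ^ k * fact k * exp (moment_rate / 2))) * exp (moment_rate * \<bar>x\<bar> / 2)" for x
  proof -
    have "\<bar>m\<bar> * \<bar>sqrt x ^ k\<bar> \<le> \<bar>m\<bar> * ((2 / moment_rate) ^ k * fact k * exp (moment_rate / 2) * exp (moment_rate * \<bar>x\<bar> / 2))"
      by (intro mult_left_mono abs_sqrt_power_le_exp moment_rate_pos) simp
    then show ?thesis by (simp add: gauss_expect_power m_def[symmetric] abs_mult mult_ac)
  qed
qed (simp_all add: integrable_U13_power)

end

theorem proposition3p14:
  fixes P :: "'a measure"
    and X Z :: "nat \<Rightarrow> 'a \<Rightarrow> real"
    and G :: "nat \<Rightarrow> nat \<Rightarrow> nat \<Rightarrow> bool"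
    and \<sigma> :: "nat \<Rightarrow> nat \<Rightarrow> real"
    and M :: real
  assumes P: "prob_space P"
    and meas_X: "\<And>i. X i \<in> borel_measurable P"
    and meas_Z: "\<And>i. Z i \<in> borel_measurable P"
    and indep: "prob_space.indep_vars P (\<lambda>_. borel) (case_sum X Z) ({1..} <+> {1..})"
    and ident: "\<And>i. 1 \<le> i \<Longrightarrow> distr P borel (X i) = distr P borel (X 1)"
    and int_X: "integrable P (X 1)"
    and mean_X: "prob_space.expectation P (X 1) = 0"
    and int_X2: "integrable P (\<lambda>\<omega>. (X 1 \<omega>)\<^sup>2)"
    and var_X: "prob_space.variance P (X 1) = 1"
    and normal_Z: "\<And>i. 1 \<le> i \<Longrightarrow> distributed P lborel (Z i) std_normal_density"
    and graphs: "\<And>n. in_graph_class n (G n)"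
    and edges: "filterlim (\<lambda>n. real (num_edges n (G n))) at_top sequentially"
    and codeg: "codegree_condition G \<sigma>"
    and bM: "trunc_var P (X 1) M > 0"
  shows "\<exists>T. T \<in> borel_measurable P \<and> L1_quad_limit P X \<sigma> M T \<and> (AE \<omega> in P. 0 \<le> T \<omega>) \<and>
      (\<forall>f :: real \<Rightarrow> real. continuous_on UNIV f \<and> bounded (range f) \<longrightarrow>
         ((\<lambda>(K1, K2). limsup (\<lambda>n. ereal \<bar>prob_space.expectation P (\<lambda>\<omega>. f (U13 P X Z G M n K1 K2 \<omega>))
                                  - (\<integral>x. f x \<partial>normal_mixture P T)\<bar>)) \<longlongrightarrow> 0) (at_top \<times>\<^sub>F at_top)) \<and>
      (\<forall>k :: nat.
         (\<forall>n K1 K2. integrable P (\<lambda>\<omega>. (U13 P X Z G M n K1 K2 \<omega>) ^ k)) \<and>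
         integrable (normal_mixture P T) (\<lambda>x. x ^ k) \<and>
         ((\<lambda>(K1, K2). limsup (\<lambda>n. ereal \<bar>prob_space.expectation P (\<lambda>\<omega>. (U13 P X Z G M n K1 K2 \<omega>) ^ k)
                                  - (\<integral>x. x ^ k \<partial>normal_mixture P T)\<bar>)) \<longlongrightarrow> 0) (at_top \<times>\<^sub>F at_top)) \<and>
      (\<exists>\<delta>>0. \<forall>t\<in>{-\<delta><..<\<delta>}. integrable (normal_mixture P T) (\<lambda>x. exp (t * x)))"
proof -
  interpret codegree_model P X Z G \<sigma> M
    by (rule codegree_model.intro[OF P meas_X meas_Z indep ident normal_Z graphs edges codeg bM])
  obtain T where T: "L1_quad_limit P X \<sigma> M T"
    using ex_L1_quad_limit by blast
  interpret codegree_limit P X Z G \<sigma> M T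
    by (rule codegree_limit.intro[OF codegree_model_axioms codegree_limit_axioms.intro[OF T]])
  show ?thesis
  proof (intro exI[of _ T] conjI allI impI measurable_T T T_nonneg integrable_U13_power
      moment_U13_tendsto integrable_normal_mixture_power[OF measurable_T moment_rate_pos exp_moment_T(1)]
      integrable_normal_mixture_exp[OF measurable_T moment_rate_pos exp_moment_T(1)])
    fix f :: "real \<Rightarrow> real"
    assume "continuous_on UNIV f \<and> bounded (range f)"
    then obtain C where "continuous_on UNIV f" "\<And>x. \<bar>f x\<bar> \<le> C"
      unfolding bounded_iff by auto
    then show "((\<lambda>(K1, K2). limsup (\<lambda>n. ereal \<bar>expectation (\<lambda>\<omega>. f (U13 P X Z G M n K1 K2 \<omega>))
        - (\<integral>x. f x \<partial>normal_mixture P T)\<bar>)) \<longlongrightarrow> 0) (at_top \<times>\<^sub>F at_top)"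
      by (rule bounded_continuous_U13_tendsto)
  qed
qed

end
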